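(* Under the setting described in the context, the family of functions $G(\Theta_T)=\{G(\theta):\theta\in\Theta_T\}$ on $\Delta_T$ is equicontinuous.
   Context: Fix $T>0$. Let $W\subset C^1([0,1]\times[0,T];[0,\infty))$ be a set of non-negative $C^1$ functions $w(y,t)$, with Borel $\sigma$-algebra from the supremum norm $\|w\|=\sup_{(y,t)\in[0,1]\times[0,T]}|w(y,t)|$. Let $\lambda$ be a Borel probability measure on $W$ with $M_W:=\int_W\|w\|\lambda(dw)<\infty$ and \[C'_W:=\sup_{w\in W}\sup_{(y,t),(y',t')\in[0,1]\times[0,T]}|w(y,t)-w(y',t')|<\infty.\] Let $\sigma\ge0$ be measurable on $W\times[0,1]$ with $\int_W\sigma(w,y)\lambda(dw)=1$ for all $y\in[0,1]$ and $\int_0^1\sigma(w,z)dz=1$ for all $w\in W$. Let $\Gamma_b=\{(0,s):0\le s\le T\}$, $\Gamma_i=\{(z,0):0\le z\le1\}$, $\Gamma=\Gamma_b\cup\Gamma_i$, $\Gamma_t=\Gamma_i\cup\{(0,s):0\le s\le t\}$, $\Delta_T=\{(\gamma,t)\in\Gamma\times[0,T]:\gamma\in\Gamma_t\}$ (a set homeomorphic to a planar trapezoid via its parametrization). Totally order $\Gamma$ by: for $s\le t$ and $z\le y$, $(0,T)\succeq(0,t)\succeq(0,s)\succeq(0,0)\succeq(z,0)\succeq(y,0)\succeq(1,0)$. The set $\Theta_T$ consists of all continuous $\theta:\Delta_T\to[0,1]$ with $\theta((y_0,t_0),t_0)=y_0$ for $(y_0,t_0)\in\Gamma$, such that for each $t$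 the map $\theta(\cdot,t):\Gamma_t\to[0,1]$ is surjective and non-increasing with respect to $\succeq$, and for each $\gamma$, $\theta(\gamma,t)$ is non-decreasing in $t$. For $\theta\in\Theta_T$, $w\in W$, $z\in[0,1)$ put $\Omega_{\theta,w,z}(0,t)=\int_0^tw(\theta((z,0),u),u)\,du$ and $\Omega_{\theta,w}(s,t)=\int_s^tw(\theta((0,s),u),u)\,du$ for $0<s\le t$. Define $G(\theta)$ on $\Delta_T$ by \[G(\theta)((y_0,0),t)=1-\int_{W\times[y_0,1)}e^{-\Omega_{\theta,w,z}(0,t)}\sigma(w,z)\,\lambda(dw)\,dz,\quad y_0\in[0,1],\] and, for $0\le t_0\le t\le T$, \[\begin{aligned}G(\theta)((0,t_0),t)=\;&1-\int_{W\times[0,1)}e^{-\Omega_{\theta,w,z}(0,t)}\sigma(w,z)\lambda(dw)dz\\&-\int_{W\times[0,1)}\sum_{k\ge1}\int_{0\le u_1\le\cdots\le u_k\le t_0}w(\theta((z,0),u_1),u_1)e^{-\Omega_{\theta,w,z}(0,u_1)}\\&\qquad\times\prod_{i=2}^k\Bigl(w(\theta((0,u_{i-1}),u_i),u_i)e^{-\Omega_{\theta,w}(u_{i-1},u_i)}\Bigr)e^{-\Omega_{\theta,w}(u_k,t)}\,du_1\cdots du_k\;\sigma(w,z)\lambda(dw)dz.\end{aligned}\] *)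

theory Defs
  imports "HOL-Analysis.Analysis" "HOL-Probability.Probability"
begin

definition rect :: "real \<Rightarrow> (real \<times> real) set" where
  "rect T = {0..1} \<times> {0..T}"

text \<open>Elements of W are identified with functions on the
  rectangle by requiring them to vanish outside of it.\<close>
definition C1_on :: "(real \<times> real) set \<Rightarrow> (real \<times> real \<Rightarrow> real) \<Rightarrow> bool" where
  "C1_on R w \<longleftrightarrow> (\<exists>D :: real \<times> real \<Rightarrow> ((real \<times> real) \<Rightarrow>\<^sub>L real).
      continuous_on R D \<and> (\<forall>p\<in>R. (w has_derivative blinfun_apply (D p)) (at p within R)))"

definition admissible_W :: "real \<Rightarrow> (real \<times> real \<Rightarrow> real) set \<Rightarrow> bool" where
  "admissible_W T W \<longleftrightarrow> (\<forall>w\<in>W. C1_on (rect T) w \<and> (\<forall>p\<in>rect T. 0 \<le> w p)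
      \<and> (\<forall>p. p \<notin> rect T \<longrightarrow> w p = 0))"

definition supnorm :: "real \<Rightarrow> (real \<times> real \<Rightarrow> real) \<Rightarrow> real" where
  "supnorm T w = (SUP p\<in>rect T. \<bar>w p\<bar>)"

definition supdist :: "real \<Rightarrow> (real \<times> real \<Rightarrow> real) \<Rightarrow> (real \<times> real \<Rightarrow> real) \<Rightarrow> real" where
  "supdist T v w = (SUP p\<in>rect T. \<bar>v p - w p\<bar>)"

definition sup_open :: "real \<Rightarrow> (real \<times> real \<Rightarrow> real) set \<Rightarrow> (real \<times> real \<Rightarrow> real) set \<Rightarrow> bool" where
  "sup_open T W U \<longleftrightarrow> U \<subseteq> W \<and>
     (\<forall>w\<in>U. \<exists>e>0. \<forall>v\<in>W. supdist T v w < e \<longrightarrow> v \<in> U)"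

definition sup_borel_sets :: "real \<Rightarrow> (real \<times> real \<Rightarrow> real) set \<Rightarrow> (real \<times> real \<Rightarrow> real) set set" where
  "sup_borel_sets T W = sigma_sets W {U. sup_open T W U}"

text \<open>Points of Gamma are pairs (y,s): (0,s) on Gamma_b and (z,0) on Gamma_i.\<close>
definition Gamma :: "real \<Rightarrow> (real \<times> real) set" where
  "Gamma T = {(0, s) | s. 0 \<le> s \<and> s \<le> T} \<union> {(z, 0) | z. 0 \<le> z \<and> z \<le> 1}"

definition Gamma_t :: "real \<Rightarrow> (real \<times> real) set" where
  "Gamma_t t = {(z, 0) | z. 0 \<le> z \<and> z \<le> 1} \<union> {(0, s) | s. 0 \<le> s \<and> s \<le> t}"

definition Delta :: "real \<Rightarrow> ((real \<times> real) \<times> real) set" where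
  "Delta T = {(\<gamma>, t). 0 \<le> t \<and> t \<le> T \<and> \<gamma> \<in> Gamma_t t}"

definition gge :: "real \<times> real \<Rightarrow> real \<times> real \<Rightarrow> bool" where
  "gge a b \<longleftrightarrow>
     (fst a = 0 \<and> fst b = 0 \<and> snd b \<le> snd a)
   \<or> (snd a = 0 \<and> snd b = 0 \<and> fst a \<le> fst b)
   \<or> (fst a = 0 \<and> snd b = 0)"

definition Theta :: "real \<Rightarrow> ((real \<times> real) \<Rightarrow> real \<Rightarrow> real) set" where
  "Theta T = {\<theta>.
      continuous_on (Delta T) (\<lambda>(\<gamma>, t). \<theta> \<gamma> t)
    \<and> (\<forall>(\<gamma>, t)\<in>Delta T. \<theta> \<gamma> t \<in> {0..1})
    \<and> (\<forall>y0 t0. (y0, t0) \<in> Gamma T \<longrightarrow> \<theta> (y0, t0) t0 = y0)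
    \<and> (\<forall>t\<in>{0..T}. (\<lambda>\<gamma>. \<theta> \<gamma> t) ` Gamma_t t = {0..1})
    \<and> (\<forall>t\<in>{0..T}. \<forall>a\<in>Gamma_t t. \<forall>b\<in>Gamma_t t. gge a b \<longrightarrow> \<theta> a t \<le> \<theta> b t)
    \<and> (\<forall>\<gamma> s t. (\<gamma>, s) \<in> Delta T \<longrightarrow> (\<gamma>, t) \<in> Delta T \<longrightarrow> s \<le> t \<longrightarrow> \<theta> \<gamma> s \<le> \<theta> \<gamma> t)}"

definition Omega_i :: "((real \<times> real) \<Rightarrow> real \<Rightarrow> real) \<Rightarrow> (real \<times> real \<Rightarrow> real) \<Rightarrow> real \<Rightarrow> real \<Rightarrow> real" where
  "Omega_i \<theta> w z t = integral {0..t} (\<lambda>u. w (\<theta> (z, 0) u, u))"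

definition Omega_b :: "((real \<times> real) \<Rightarrow> real \<Rightarrow> real) \<Rightarrow> (real \<times> real \<Rightarrow> real) \<Rightarrow> real \<Rightarrow> real \<Rightarrow> real" where
  "Omega_b \<theta> w s t = integral {s..t} (\<lambda>u. w (\<theta> (0, s) u, u))"

text \<open>Ordered ord_simplex {0 \<le> u_1 \<le> ... \<le> u_k \<le> t0}, with u_i written u (i-1).\<close>
definition ord_simplex :: "nat \<Rightarrow> real \<Rightarrow> (nat \<Rightarrow> real) set" where
  "ord_simplex k t0 = {u \<in> ({..<k} \<rightarrow>\<^sub>E UNIV).
      (\<forall>i<k. 0 \<le> u i \<and> u i \<le> t0) \<and> (\<forall>i. Suc i < k \<longrightarrow> u i \<le> u (Suc i))}"

definition jump_integrand ::
  "((real \<times> real) \<Rightarrow> real \<Rightarrow> real) \<Rightarrow> (real \<times> real \<Rightarrow> real) \<Rightarrow> real \<Rightarrow> real \<Rightarrow> nat \<Rightarrow> (nat \<Rightarrow> real) \<Rightarrow> real" where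
  "jump_integrand \<theta> w z t k u =
     w (\<theta> (z, 0) (u 0), u 0) * exp (- Omega_i \<theta> w z (u 0))
     * (\<Prod>i\<in>{1..<k}. w (\<theta> (0, u (i - 1)) (u i), u i) * exp (- Omega_b \<theta> w (u (i - 1)) (u i)))
     * exp (- Omega_b \<theta> w (u (k - 1)) t)"

definition G ::
  "(real \<times> real \<Rightarrow> real) measure \<Rightarrow> ((real \<times> real \<Rightarrow> real) \<Rightarrow> real \<Rightarrow> real)
   \<Rightarrow> ((real \<times> real) \<Rightarrow> real \<Rightarrow> real) \<Rightarrow> (real \<times> real) \<Rightarrow> real \<Rightarrow> real" where
  "G lam \<sigma> \<theta> \<gamma> t =
    (if snd \<gamma> = 0 then
       1 - (LINT p : space lam \<times> {fst \<gamma>..<1} | (lam \<Otimes>\<^sub>M lborel).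
              exp (- Omega_i \<theta> (fst p) (snd p) t) * \<sigma> (fst p) (snd p))
     else
       1 - (LINT p : space lam \<times> {0..<1} | (lam \<Otimes>\<^sub>M lborel).
              exp (- Omega_i \<theta> (fst p) (snd p) t) * \<sigma> (fst p) (snd p))
         - (LINT p : space lam \<times> {0..<1} | (lam \<Otimes>\<^sub>M lborel).
              (\<Sum>k. (LINT u : ord_simplex (Suc k) (snd \<gamma>) | PiM {..<Suc k} (\<lambda>_. lborel).
                       jump_integrand \<theta> (fst p) (snd p) t (Suc k) u))
              * \<sigma> (fst p) (snd p)))"

end

theory Submission
  imports Defs
begin

text \<open>
  The family is in fact uniformly Lipschitz: for every \<open>\<theta>\<close>,
  \<open>\<bar>G(\<theta>)(x') - G(\<theta>)(x)\<bar> \<le> (1 + 4 M\<^sub>W) dist x' x\<close>. The series over \<open>k\<close> in \<open>G\<close> is a sum of iterated integrals over ordered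
  simplices whose integrands are the densities \<open>\<rho> e\<^sup>-\<^sup>\<Omega>\<close> of a jump process with rates bounded
  by \<open>\<parallel>w\<parallel>\<close>. Writing the partial sums as iterates of an integral kernel, they are dominated by any
  supersolution \<open>\<phi> \<ge> g + K \<phi>\<close>; the constant supersolution \<open>1\<close> bounds the series by
  \<open>1 - e\<^sup>-\<^sup>\<Omega>\<close> and a two-valued supersolution shows that moving the upper limit \<open>t\<^sub>0\<close> of the
  simplex changes the series by at most \<open>2 \<parallel>w\<parallel> \<Delta>t\<^sub>0\<close>, while moving \<open>t\<close> changes it by at most
  \<open>\<parallel>w\<parallel> \<Delta>t\<close>. Integrating these bounds against \<open>\<sigma>(w,z) \<lambda>(dw) dz\<close>, the change of the lower
  limit \<open>y\<^sub>0\<close> costs \<open>\<bar>\<Delta>y\<^sub>0\<bar>\<close> (since \<open>\<integral>\<sigma>(w,y) \<lambda>(dw) = 1\<close>) and the changes of \<open>t\<^sub>0, t\<close> cost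
  \<open>M\<^sub>W\<close> times their size (since \<open>\<integral>\<sigma>(w,z) dz = 1\<close>).
  Most of the work is measurability in \<open>w\<close>: all quantities are continuous in \<open>w\<close> for the
  sup distance, hence measurable for the Borel sets of that distance.
\<close>

section \<open>The sup distance on W\<close>

lemma mem_rect_iff: "(a, b) \<in> rect T \<longleftrightarrow> 0 \<le> a \<and> a \<le> 1 \<and> 0 \<le> b \<and> b \<le> T"
  unfolding rect_def by auto

lemma admissible_W_continuous_on:
  assumes "admissible_W T W" "w \<in> W"
  shows "continuous_on (rect T) w"
proof -
  from assms obtain D where "\<forall>p\<in>rect T. (w has_derivative blinfun_apply (D p)) (at p within rect T)"
    unfolding admissible_W_def C1_on_def by blast
  then show ?thesis
    unfolding continuous_on_eq_continuous_within using has_derivative_continuous by blast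
qed

lemma admissible_W_nonneg: "admissible_W T W \<Longrightarrow> w \<in> W \<Longrightarrow> p \<in> rect T \<Longrightarrow> 0 \<le> w p"
  unfolding admissible_W_def by blast

lemma bdd_above_abs_rect:
  fixes f :: "real \<times> real \<Rightarrow> real"
  assumes "continuous_on (rect T) f"
  shows "bdd_above ((\<lambda>p. \<bar>f p\<bar>) ` rect T)"
proof -
  have "compact ((\<lambda>p. \<bar>f p\<bar>) ` rect T)"
    unfolding rect_def by (intro compact_continuous_image continuous_intros assms[unfolded rect_def])
      (simp add: compact_Times)
  then show ?thesis by (intro bounded_imp_bdd_above compact_imp_bounded)
qed

lemma abs_le_supnorm:
  assumes "admissible_W T W" "w \<in> W" "p \<in> rect T"
  shows "\<bar>w p\<bar> \<le> supnorm T w"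
  unfolding supnorm_def
  by (rule cSUP_upper[OF assms(3) bdd_above_abs_rect[OF admissible_W_continuous_on[OF assms(1,2)]]])

lemma supnorm_nonneg:
  assumes "admissible_W T W" "w \<in> W" "0 \<le> T"
  shows "0 \<le> supnorm T w"
  using abs_le_supnorm[OF assms(1,2), of "(0, 0)"] assms(3) by (simp add: mem_rect_iff)

lemma abs_diff_le_supdist:
  assumes "admissible_W T W" "v \<in> W" "w \<in> W" "p \<in> rect T"
  shows "\<bar>v p - w p\<bar> \<le> supdist T v w"
proof -
  have "continuous_on (rect T) (\<lambda>p. v p - w p)"
    using admissible_W_continuous_on assms(1-3) by (intro continuous_intros) auto
  from bdd_above_abs_rect[OF this] show ?thesis
    unfolding supdist_def by (rule cSUP_upper[OF assms(4)])
qed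

lemma abs_supnorm_diff_le_supdist:
  assumes "admissible_W T W" "v \<in> W" "w \<in> W" "0 \<le> T"
  shows "\<bar>supnorm T v - supnorm T w\<bar> \<le> supdist T v w"
proof -
  have ne: "rect T \<noteq> {}" using assms(4) by (auto simp: rect_def)
  have "supnorm T v \<le> supnorm T w + supdist T v w"
    unfolding supnorm_def[of T v]
  proof (rule cSUP_least[OF ne])
    fix p assume p: "p \<in> rect T"
    have "\<bar>v p\<bar> \<le> \<bar>w p\<bar> + \<bar>v p - w p\<bar>" by simp
    then show "\<bar>v p\<bar> \<le> supnorm T w + supdist T v w"
      using abs_le_supnorm[OF assms(1,3) p] abs_diff_le_supdist[OF assms(1-3) p] by simp
  qed
  moreover have "supnorm T w \<le> supnorm T v + supdist T v w"
    unfolding supnorm_def[of T w]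
  proof (rule cSUP_least[OF ne])
    fix p assume p: "p \<in> rect T"
    have "\<bar>w p\<bar> \<le> \<bar>v p\<bar> + \<bar>v p - w p\<bar>" by simp
    then show "\<bar>w p\<bar> \<le> supnorm T v + supdist T v w"
      using abs_le_supnorm[OF assms(1,2) p] abs_diff_le_supdist[OF assms(1-3) p] by simp
  qed
  ultimately show ?thesis by linarith
qed

definition sup_filter ::
  "real \<Rightarrow> (real \<times> real \<Rightarrow> real) set \<Rightarrow> (real \<times> real \<Rightarrow> real) \<Rightarrow> (real \<times> real \<Rightarrow> real) filter" where
  "sup_filter T W w = (INF e\<in>{0<..}. principal {v\<in>W. supdist T v w < e})"

lemma eventually_sup_filter:
  "eventually P (sup_filter T W w) \<longleftrightarrow> (\<exists>e>0. \<forall>v\<in>W. supdist T v w < e \<longrightarrow> P v)"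
  unfolding sup_filter_def
  apply (subst eventually_INF_base)
    apply (auto simp: eventually_principal)
  subgoal for a b by (rule bexI[of _ "min a b"]) auto
  done

lemma borel_measurable_if_tendsto_sup_filter:
  fixes f :: "(real \<times> real \<Rightarrow> real) \<Rightarrow> real"
  assumes "sets M = sup_borel_sets T W" "space M = W"
    and "\<And>w. w \<in> W \<Longrightarrow> (f \<longlongrightarrow> f w) (sup_filter T W w)"
  shows "f \<in> borel_measurable M"
  unfolding borel_measurable_iff_greater
proof
  fix a
  have "sup_open T W {w \<in> W. a < f w}"
    unfolding sup_open_def
  proof safe
    fix w assume "w \<in> W" "a < f w"
    then have "eventually (\<lambda>v. a < f v) (sup_filter T W w)"
      using assms(3) order_tendstoD(1) by blast
    then show "\<exists>e>0. \<forall>v\<in>W. supdist T v w < e \<longrightarrow> v \<in> {w \<in> W. a < f w}"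
      unfolding eventually_sup_filter by auto
  qed
  then show "{w \<in> space M. a < f w} \<in> sets M"
    unfolding assms(1,2) sup_borel_sets_def by (auto intro: sigma_sets.Basic)
qed

lemma tendsto_sup_filter_eval:
  assumes "admissible_W T W" "w \<in> W" "p \<in> rect T"
  shows "((\<lambda>v. v p) \<longlongrightarrow> w p) (sup_filter T W w)"
proof (rule tendstoI)
  fix e :: real assume "e > 0"
  then show "eventually (\<lambda>v. dist (v p) (w p) < e) (sup_filter T W w)"
    unfolding eventually_sup_filter
    using abs_diff_le_supdist[OF assms(1) _ assms(2,3)] by (force simp: dist_real_def)
qed

lemma tendsto_sup_filter_integral:
  fixes a b :: real
  assumes adm: "admissible_W T W" and w: "w \<in> W"
    and g: "\<And>u. u \<in> {a..b} \<Longrightarrow> g u \<in> rect T" and gc: "continuous_on {a..b} g"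
  shows "((\<lambda>v. integral {a..b} (\<lambda>u. v (g u))) \<longlongrightarrow> integral {a..b} (\<lambda>u. w (g u))) (sup_filter T W w)"
proof (cases "a \<le> b")
  case False
  then show ?thesis by simp
next
  case True
  show ?thesis
  proof (rule tendstoI)
    fix e :: real assume "e > 0"
    define d where "d = e / (b - a + 1)"
    have d: "d > 0" using \<open>e > 0\<close> True by (simp add: d_def)
    have cw: "continuous_on {a..b} (\<lambda>u. v (g u))" if "v \<in> W" for v
      using continuous_on_compose2[OF admissible_W_continuous_on[OF adm that] gc] g
      by (metis image_subsetI)
    show "eventually (\<lambda>v. dist (integral {a..b} (\<lambda>u. v (g u))) (integral {a..b} (\<lambda>u. w (g u))) < e)
        (sup_filter T W w)"
      unfolding eventually_sup_filter
    proof (intro exI[of _ d] conjI d ballI impI)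
      fix v assume v: "v \<in> W" and sd: "supdist T v w < d"
      have "dist (integral {a..b} (\<lambda>u. v (g u))) (integral {a..b} (\<lambda>u. w (g u)))
          = norm (integral {a..b} (\<lambda>u. v (g u) - w (g u)))"
        by (simp add: dist_norm integral_diff integrable_continuous_real cw v w)
      also have "\<dots> \<le> d * (b - a)"
      proof (rule integral_bound[OF True])
        show "continuous_on {a..b} (\<lambda>u. v (g u) - w (g u))"
          using cw[OF v] cw[OF w] by (intro continuous_intros)
        show "norm (v (g u) - w (g u)) \<le> d" if "u \<in> {a..b}" for u
          using abs_diff_le_supdist[OF adm v w g[OF that]] sd by simp
      qed
      also have "\<dots> < e" using d True \<open>e > 0\<close> by (simp add: d_def field_simps)
      finally show "dist (integral {a..b} (\<lambda>u. v (g u))) (integral {a..b} (\<lambda>u. w (g u))) < e" .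
    qed
  qed
qed

section \<open>Parametric integrals and elementary estimates\<close>

lemma continuous_on_compose_pair:
  fixes h :: "'a::topological_space \<Rightarrow> 'b::topological_space \<Rightarrow> 'c::topological_space"
  assumes "continuous_on S (\<lambda>(a, b). h a b)" "continuous_on U f" "continuous_on U g"
    and "\<And>x. x \<in> U \<Longrightarrow> (f x, g x) \<in> S"
  shows "continuous_on U (\<lambda>x. h (f x) (g x))"
  using continuous_on_compose2[OF assms(1) continuous_on_Pair[OF assms(2,3)]] assms(4) by auto

lemma continuous_on_integral_upper_param:
  fixes h :: "real \<Rightarrow> real \<Rightarrow> real"
  assumes hc: "continuous_on (K \<times> {0..T}) (\<lambda>(p, v). h p v)" and T: "0 \<le> T"
  shows "continuous_on (K \<times> {0..T}) (\<lambda>(p, y). integral {0..y} (h p))"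
proof -
  \<comment> \<open>Freeze the integrand at \<open>y\<close> beyond \<open>y\<close>, so that the domain of integration no longer moves.\<close>
  have eq: "integral {0..y} (h p) = integral {0..T} (\<lambda>v. h p (min v y)) - (T - y) * h p y"
    if p: "p \<in> K" and y: "0 \<le> y" "y \<le> T" for p y
  proof -
    have c: "continuous_on {0..T} (\<lambda>v. h p (min v y))"
      using p y by (intro continuous_on_compose_pair[OF hc] continuous_intros) auto
    have "integral {0..T} (\<lambda>v. h p (min v y))
        = integral {0..y} (\<lambda>v. h p (min v y)) + integral {y..T} (\<lambda>v. h p (min v y))"
      using Henstock_Kurzweil_Integration.integral_combine[where a=0 and c=y and b=T and f="\<lambda>v. h p (min v y)"]
        y integrable_continuous_real[OF c] by simp
    also have "integral {0..y} (\<lambda>v. h p (min v y)) = integral {0..y} (h p)"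
      by (rule integral_cong) auto
    also have "integral {y..T} (\<lambda>v. h p (min v y)) = integral {y..T} (\<lambda>v. h p y)"
      by (rule integral_cong) auto
    finally show ?thesis using y by simp
  qed
  have "continuous_on ((K \<times> {0..T}) \<times> cbox 0 T) (\<lambda>(x, v). h (fst x) (min v (snd x)))"
    unfolding split_beta' by (intro continuous_on_compose_pair[OF hc] continuous_intros) auto
  from integral_continuous_on_param[OF this]
  have "continuous_on (K \<times> {0..T})
      (\<lambda>x. integral {0..T} (\<lambda>v. h (fst x) (min v (snd x))) - (T - snd x) * h (fst x) (snd x))"
    using hc by (intro continuous_intros) (auto simp: split_beta')
  then show ?thesis
    by (rule continuous_on_eq) (auto simp: eq)
qed

definition time_triangle :: "real \<Rightarrow> (real \<times> real) set" where
  "time_triangle T = {(s, y). 0 \<le> s \<and> s \<le> y \<and> y \<le> T}"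

lemma continuous_on_integral_time_triangle:
  fixes h :: "real \<Rightarrow> real \<Rightarrow> real"
  assumes hc: "continuous_on (time_triangle T) (\<lambda>(s, v). h s v)" and T: "0 \<le> T"
  shows "continuous_on (time_triangle T) (\<lambda>(s, y). integral {s..y} (h s))"
proof -
  define h' where "h' s v = h s (max s v)" for s v
  have hc': "continuous_on ({0..T} \<times> {0..T}) (\<lambda>(s, v). h' s v)"
    unfolding h'_def split_beta'
    by (intro continuous_on_compose_pair[OF hc] continuous_intros) (auto simp: time_triangle_def)
  note F = continuous_on_integral_upper_param[OF hc' T]
  have sub: "time_triangle T \<subseteq> {0..T} \<times> {0..T}" by (auto simp: time_triangle_def)
  have Fc: "continuous_on (time_triangle T)
      (\<lambda>x. integral {0..snd x} (h' (fst x)) - integral {0..fst x} (h' (fst x)))"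
  proof (intro continuous_intros)
    show "continuous_on (time_triangle T) (\<lambda>x. integral {0..snd x} (h' (fst x)))"
      using continuous_on_subset[OF F sub] by (simp add: split_beta')
    show "continuous_on (time_triangle T) (\<lambda>x. integral {0..fst x} (h' (fst x)))"
      by (intro continuous_on_compose_pair[OF F] continuous_intros) (auto simp: time_triangle_def)
  qed
  have eq: "integral {s..y} (h s) = integral {0..y} (h' s) - integral {0..s} (h' s)"
    if "(s, y) \<in> time_triangle T" for s y
  proof -
    have s: "0 \<le> s" "s \<le> y" "y \<le> T" using that by (auto simp: time_triangle_def)
    have "continuous_on {0..y} (h' s)"
      using s by (intro continuous_on_compose_pair[OF hc'] continuous_intros) auto
    from integrable_continuous_real[OF this]
    have "integral {0..y} (h' s) = integral {0..s} (h' s) + integral {s..y} (h' s)"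
      using Henstock_Kurzweil_Integration.integral_combine[where a=0 and c=s and b=y and f="h' s"] s
      by simp
    moreover have "integral {s..y} (h' s) = integral {s..y} (h s)"
      by (rule integral_cong) (auto simp: h'_def max_def)
    ultimately show ?thesis by simp
  qed
  show ?thesis
    by (rule continuous_on_eq[OF Fc]) (auto simp: eq)
qed

lemma dyadic_floor_LIMSEQ: "(\<lambda>n. real_of_int \<lfloor>2 ^ n * a\<rfloor> / 2 ^ n) \<longlonglongrightarrow> (a::real)"
proof (rule tendsto_sandwich[of "\<lambda>n. a - (1 / 2) ^ n" _ _ "\<lambda>n. a"])
  show "\<forall>\<^sub>F n in sequentially. a - (1 / 2) ^ n \<le> real_of_int \<lfloor>2 ^ n * a\<rfloor> / 2 ^ n"
  proof (intro always_eventually allI)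
    fix n :: nat
    have "(2 ^ n * a - 1) / 2 ^ n \<le> real_of_int \<lfloor>2 ^ n * a\<rfloor> / 2 ^ n"
      by (intro divide_right_mono) (linarith, simp)
    then show "a - (1 / 2) ^ n \<le> real_of_int \<lfloor>2 ^ n * a\<rfloor> / 2 ^ n"
      by (simp add: field_simps power_divide)
  qed
  show "\<forall>\<^sub>F n in sequentially. real_of_int \<lfloor>2 ^ n * a\<rfloor> / 2 ^ n \<le> a"
  proof (intro always_eventually allI)
    fix n :: nat
    have "real_of_int \<lfloor>2 ^ n * a\<rfloor> \<le> 2 ^ n * a" by linarith
    then show "real_of_int \<lfloor>2 ^ n * a\<rfloor> / 2 ^ n \<le> a" by (simp add: field_simps)
  qed
  have "(\<lambda>n. a - (1 / 2 :: real) ^ n) \<longlonglongrightarrow> a - 0"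
    by (intro tendsto_intros LIMSEQ_power_zero) auto
  then show "(\<lambda>n. a - (1 / 2 :: real) ^ n) \<longlonglongrightarrow> a" by simp
qed simp

text \<open>Jointly measurable as the pointwise limit of its values on the dyadic grid.\<close>
lemma borel_measurable_caratheodory:
  fixes f :: "'a \<Rightarrow> real \<times> real \<Rightarrow> real"
  assumes fm: "\<And>x. (\<lambda>w. f w x) \<in> borel_measurable M"
    and fc: "\<And>w. w \<in> space M \<Longrightarrow> continuous_on UNIV (f w)"
  shows "(\<lambda>p. f (fst p) (snd p)) \<in> borel_measurable (M \<Otimes>\<^sub>M (lborel \<Otimes>\<^sub>M lborel))"
proof (rule borel_measurable_LIMSEQ_real)
  let ?N = "M \<Otimes>\<^sub>M (lborel \<Otimes>\<^sub>M lborel)"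
  define q :: "nat \<Rightarrow> real \<times> real \<Rightarrow> int \<times> int" where
    "q n x = (\<lfloor>2 ^ n * fst x\<rfloor>, \<lfloor>2 ^ n * snd x\<rfloor>)" for n x
  define r :: "nat \<Rightarrow> int \<times> int \<Rightarrow> real \<times> real" where
    "r n ij = (real_of_int (fst ij) / 2 ^ n, real_of_int (snd ij) / 2 ^ n)" for n ij
  show "(\<lambda>n. f (fst p) (r n (q n (snd p)))) \<longlonglongrightarrow> f (fst p) (snd p)" if "p \<in> space ?N" for p
  proof -
    have "(\<lambda>n. r n (q n (snd p))) \<longlonglongrightarrow> (fst (snd p), snd (snd p))"
      unfolding r_def q_def fst_conv snd_conv by (intro tendsto_Pair dyadic_floor_LIMSEQ)
    moreover have "isCont (f (fst p)) (snd p)"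
      using fc that continuous_on_eq_continuous_at open_UNIV by (force simp: space_pair_measure)
    ultimately show ?thesis using isCont_tendsto_compose by fastforce
  qed
  show "(\<lambda>p. f (fst p) (r n (q n (snd p)))) \<in> borel_measurable ?N" for n
  proof (rule measurable_compose_countable[where f="\<lambda>ij p. f (fst p) (r n ij)" and g="\<lambda>p. q n (snd p)"])
    show "(\<lambda>p. f (fst p) (r n ij)) \<in> borel_measurable ?N" for ij
      by (rule measurable_compose[OF measurable_fst fm])
    show "(\<lambda>p. q n (snd p)) \<in> ?N \<rightarrow>\<^sub>M count_space UNIV"
      unfolding measurable_count_space_eq2_countable
    proof safe
      fix i j :: int
      have "(\<lambda>p. q n (snd p)) -` {(i, j)} \<inter> space ?N =
        {p \<in> space ?N. \<lfloor>2 ^ n * fst (snd p)\<rfloor> = i \<and> \<lfloor>2 ^ n * snd (snd p)\<rfloor> = j}"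
        by (auto simp: q_def)
      also have "\<dots> \<in> sets ?N" by measurable
      finally show "(\<lambda>p. q n (snd p)) -` {(i, j)} \<inter> space ?N \<in> sets ?N" .
    qed simp
  qed
qed

lemma nn_integral_hazard:
  fixes \<rho> f :: "real \<Rightarrow> real"
  assumes rc: "continuous_on {lo..hi} \<rho>" and ab: "lo \<le> \<alpha>" "\<alpha> \<le> \<beta>" "\<beta> \<le> hi"
    and feq: "\<And>y. y \<in> {\<alpha>..\<beta>} \<Longrightarrow> f y = \<rho> y * exp (- integral {lo..y} \<rho>)"
    and fnn: "\<And>y. y \<in> {\<alpha>..\<beta>} \<Longrightarrow> 0 \<le> f y"
  shows "(\<integral>\<^sup>+y. indicator {\<alpha>..\<beta>} y * ennreal (f y) \<partial>lborel)
       = ennreal (exp (- integral {lo..\<alpha>} \<rho>) - exp (- integral {lo..\<beta>} \<rho>))"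
proof -
  define F where "F y = - exp (- integral {lo..y} \<rho>)" for y
  have "(F has_vector_derivative (\<rho> y * exp (- integral {lo..y} \<rho>))) (at y within {\<alpha>..\<beta>})"
    if "y \<in> {\<alpha>..\<beta>}" for y
  proof -
    have y: "y \<in> {lo..hi}" using that ab by auto
    have "((\<lambda>u. integral {lo..u} \<rho>) has_real_derivative \<rho> y) (at y within {lo..hi})"
      using integral_has_vector_derivative[OF rc y]
      by (simp add: has_real_derivative_iff_has_vector_derivative)
    then have "(F has_real_derivative (\<rho> y * exp (- integral {lo..y} \<rho>))) (at y within {lo..hi})"
      unfolding F_def by (auto intro!: derivative_eq_intros)
    then show ?thesis
      unfolding has_real_derivative_iff_has_vector_derivative
      by (rule has_vector_derivative_within_subset) (use ab in auto)
  qed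
  from fundamental_theorem_of_calculus[OF ab(2) this]
  have "(f has_integral (F \<beta> - F \<alpha>)) {\<alpha>..\<beta>}"
    using feq by (subst has_integral_cong) auto
  from nn_integral_has_integral_lebesgue'[OF fnn this]
  show ?thesis by (simp add: F_def mult.commute)
qed

lemma integral_split_bounds:
  fixes \<rho> :: "real \<Rightarrow> real"
  assumes "continuous_on {lo..hi} \<rho>" "\<And>v. v \<in> {lo..hi} \<Longrightarrow> 0 \<le> \<rho> v \<and> \<rho> v \<le> C"
    and "lo \<le> \<alpha>" "\<alpha> \<le> \<beta>" "\<beta> \<le> hi"
  shows "integral {lo..\<beta>} \<rho> = integral {lo..\<alpha>} \<rho> + integral {\<alpha>..\<beta>} \<rho>"
    and "0 \<le> integral {\<alpha>..\<beta>} \<rho>" "integral {\<alpha>..\<beta>} \<rho> \<le> C * (\<beta> - \<alpha>)"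
    and "0 \<le> integral {lo..\<alpha>} \<rho>"
proof -
  have c: "continuous_on {a..b} \<rho>" if "lo \<le> a" "b \<le> hi" for a b
    by (rule continuous_on_subset[OF assms(1)]) (use that in auto)
  show "integral {lo..\<beta>} \<rho> = integral {lo..\<alpha>} \<rho> + integral {\<alpha>..\<beta>} \<rho>"
    using Henstock_Kurzweil_Integration.integral_combine[where a=lo and c=\<alpha> and b=\<beta> and f=\<rho>]
      integrable_continuous_real[OF c] assms by simp
  show "0 \<le> integral {\<alpha>..\<beta>} \<rho>" "0 \<le> integral {lo..\<alpha>} \<rho>"
    using assms by (intro integral_nonneg integrable_continuous_real c; force)+
  have "integral {\<alpha>..\<beta>} \<rho> \<le> integral {\<alpha>..\<beta>} (\<lambda>_. C)"
    using assms by (intro integral_le integrable_continuous_real c) auto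
  then show "integral {\<alpha>..\<beta>} \<rho> \<le> C * (\<beta> - \<alpha>)" using assms by (simp add: mult.commute)
qed

lemma abs_mult_diff_le:
  fixes a a' b b' :: real
  assumes "0 \<le> b" "b \<le> 1" "0 \<le> a'" "a' \<le> 1"
  shows "\<bar>a * b - a' * b'\<bar> \<le> \<bar>a - a'\<bar> + \<bar>b - b'\<bar>"
proof -
  have "\<bar>a * b - a' * b'\<bar> = \<bar>(a - a') * b + a' * (b - b')\<bar>" by (simp add: algebra_simps)
  also have "\<dots> \<le> \<bar>a - a'\<bar> * b + a' * \<bar>b - b'\<bar>"
    using assms by (metis abs_mult abs_of_nonneg abs_triangle_ineq)
  also have "\<dots> \<le> \<bar>a - a'\<bar> + \<bar>b - b'\<bar>"
    using assms by (intro add_mono mult_left_le mult_left_le_one_le) auto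
  finally show ?thesis .
qed

lemma exp_minus_diff_le:
  fixes x d e :: real
  assumes "0 \<le> d" "d \<le> e"
  shows "exp (- x) - exp (- (x + d)) \<le> exp (- x) * e"
proof -
  have "1 - d \<le> exp (- d)" using exp_ge_add_one_self[of "- d"] by simp
  then have "exp (- x) * (1 - exp (- d)) \<le> exp (- x) * e"
    using assms by (intro mult_left_mono) auto
  then show ?thesis by (simp add: algebra_simps exp_add[symmetric])
qed

section \<open>Iterated integrals over ordered simplices\<close>

text \<open>The \<open>k\<close>-th term of the jump series in \<open>G\<close> is \<open>simplex_integral a b t\<^sub>0 (k + 1) g\<close> with
  \<open>a\<close>, \<open>b\<close> the jump densities and \<open>g\<close> the probability of no further jump before \<open>t\<close>.\<close>

definition chain_weight :: "(real \<Rightarrow> real) \<Rightarrow> (real \<Rightarrow> real \<Rightarrow> real) \<Rightarrow> nat \<Rightarrow> (nat \<Rightarrow> real) \<Rightarrow> real" where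
  "chain_weight a b n u = a (u 0) * (\<Prod>i\<in>{1..<n}. b (u (i - 1)) (u i))"

definition simplex_integral ::
  "(real \<Rightarrow> real) \<Rightarrow> (real \<Rightarrow> real \<Rightarrow> real) \<Rightarrow> real \<Rightarrow> nat \<Rightarrow> (real \<Rightarrow> ennreal) \<Rightarrow> ennreal" where
  "simplex_integral a b t0 n g =
     (\<integral>\<^sup>+u. indicator (ord_simplex n t0) u * ennreal (chain_weight a b n u) * g (u (n - 1))
        \<partial>PiM {..<n} (\<lambda>_. lborel))"

definition kernel :: "(real \<Rightarrow> real \<Rightarrow> real) \<Rightarrow> real \<Rightarrow> (real \<Rightarrow> ennreal) \<Rightarrow> real \<Rightarrow> ennreal" where
  "kernel b t0 g s = (\<integral>\<^sup>+y. indicator {s..t0} y * ennreal (b s y) * g y \<partial>lborel)"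

fun neumann_sum :: "(real \<Rightarrow> real \<Rightarrow> real) \<Rightarrow> real \<Rightarrow> (real \<Rightarrow> ennreal) \<Rightarrow> nat \<Rightarrow> real \<Rightarrow> ennreal" where
  "neumann_sum b t0 g 0 = (\<lambda>_. 0)"
| "neumann_sum b t0 g (Suc N) = (\<lambda>s. g s + kernel b t0 (neumann_sum b t0 g N) s)"

lemma measurable_component_real:
  "i < n \<Longrightarrow> (\<lambda>u. u i) \<in> borel_measurable (PiM {..<n} (\<lambda>_. lborel :: real measure))"
  using measurable_component_singleton[of i "{..<n}" "\<lambda>_. lborel :: real measure"]
  by (simp add: measurable_cong_sets[OF refl sets_lborel])

lemma ord_simplex_sets: "ord_simplex n t0 \<in> sets (PiM {..<n} (\<lambda>_. lborel :: real measure))"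
proof -
  let ?M = "PiM {..<n} (\<lambda>_. lborel :: real measure)"
  have "ord_simplex n t0 = {u\<in>space ?M. (\<forall>i\<in>{..<n}. 0 \<le> u i \<and> u i \<le> t0)
      \<and> (\<forall>i\<in>{i. Suc i < n}. u i \<le> u (Suc i))}"
    unfolding ord_simplex_def by (auto simp: space_PiM)
  also have "\<dots> \<in> sets ?M"
  proof (rule sets.sets_Collect_conj; rule sets.sets_Collect_finite_All)
    fix i assume "i \<in> {..<n}"
    then have [measurable]: "(\<lambda>u. u i) \<in> borel_measurable ?M"
      by (intro measurable_component_real) auto
    show "{u\<in>space ?M. 0 \<le> u i \<and> u i \<le> t0} \<in> sets ?M" by measurable
  next
    fix i assume "i \<in> {i. Suc i < n}"
    then have [measurable]: "(\<lambda>u. u i) \<in> borel_measurable ?M" "(\<lambda>u. u (Suc i)) \<in> borel_measurable ?M"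
      by (intro measurable_component_real; auto)+
    show "{u\<in>space ?M. u i \<le> u (Suc i)} \<in> sets ?M" by measurable
  qed (auto intro: finite_subset[of _ "{..<n}"])
  finally show ?thesis .
qed

lemma ord_simplex_bounds:
  assumes "u \<in> ord_simplex n t0" "i < n"
  shows "0 \<le> u i" "u i \<le> t0"
  using assms unfolding ord_simplex_def by auto

lemma ord_simplex_mono:
  assumes "u \<in> ord_simplex n t0" "i \<le> j" "j < n"
  shows "u i \<le> u j"
  using assms(2,3)
proof (induction j)
  case (Suc j)
  show ?case
  proof (cases "i = Suc j")
    case False
    then have "u i \<le> u j" using Suc by auto
    also have "u j \<le> u (Suc j)" using assms(1) Suc.prems unfolding ord_simplex_def by auto
    finally show ?thesis .
  qed simp
qed simp

lemma ord_simplex_le_last: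
  assumes "u \<in> ord_simplex n t0" "i < n"
  shows "u i \<le> u (n - 1)"
  by (rule ord_simplex_mono[OF assms(1)]) (use assms(2) in auto)

lemma ord_simplex_last_iff:
  assumes "n \<ge> 1" "t0 \<le> t0'"
  shows "u \<in> ord_simplex n t0 \<longleftrightarrow> u \<in> ord_simplex n t0' \<and> u (n - 1) \<le> t0"
proof
  assume u: "u \<in> ord_simplex n t0"
  then show "u \<in> ord_simplex n t0' \<and> u (n - 1) \<le> t0"
    using assms ord_simplex_bounds[OF u, of "n - 1"] unfolding ord_simplex_def by auto
next
  assume u: "u \<in> ord_simplex n t0' \<and> u (n - 1) \<le> t0"
  then have "u i \<le> t0" if "i < n" for i
    using ord_simplex_le_last[of u n t0' i] that by auto
  then show "u \<in> ord_simplex n t0" using u unfolding ord_simplex_def by auto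
qed

lemma ord_simplex_upd_iff:
  assumes x: "x \<in> {..<n} \<rightarrow>\<^sub>E UNIV" and n: "n \<ge> 1"
  shows "x(n := y) \<in> ord_simplex (Suc n) t0 \<longleftrightarrow> x \<in> ord_simplex n t0 \<and> y \<in> {x (n - 1)..t0}"
proof
  assume A: "x(n := y) \<in> ord_simplex (Suc n) t0"
  have A1: "\<And>i. i < Suc n \<Longrightarrow> 0 \<le> (x(n := y)) i \<and> (x(n := y)) i \<le> t0"
    and A2: "\<And>i. Suc i < Suc n \<Longrightarrow> (x(n := y)) i \<le> (x(n := y)) (Suc i)"
    using A unfolding ord_simplex_def by blast+
  have upd: "(x(n := y)) i = x i" if "i < n" for i using that by simp
  have "0 \<le> x i \<and> x i \<le> t0" if "i < n" for i using A1[of i] upd[OF that] that by simp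
  moreover have "x i \<le> x (Suc i)" if "Suc i < n" for i using A2[of i] upd that by simp
  ultimately have "x \<in> ord_simplex n t0" using x unfolding ord_simplex_def by blast
  moreover have "x (n - 1) \<le> y" using A2[of "n - 1"] upd[of "n - 1"] n by simp
  moreover have "y \<le> t0" using A1[of n] by simp
  ultimately show "x \<in> ord_simplex n t0 \<and> y \<in> {x (n - 1)..t0}" by auto
next
  assume B: "x \<in> ord_simplex n t0 \<and> y \<in> {x (n - 1)..t0}"
  then have "0 \<le> x (n - 1)" using ord_simplex_bounds[of x n t0 "n - 1"] n by auto
  moreover have "(x(n := y)) i \<le> (x(n := y)) (Suc i)" if "Suc i < Suc n" for i
  proof (cases "Suc i = n")
    case True
    then show ?thesis using B by auto
  qed (use B that in \<open>auto simp: ord_simplex_def\<close>)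
  ultimately show "x(n := y) \<in> ord_simplex (Suc n) t0"
    using B x unfolding ord_simplex_def by (auto simp: PiE_def extensional_def less_Suc_eq)
qed

lemma chain_weight_upd:
  assumes n: "n \<ge> 1"
  shows "chain_weight a b (Suc n) (x(n := y)) = chain_weight a b n x * b (x (n - 1)) y"
proof -
  have "(\<Prod>i\<in>{1..<n}. b ((x(n := y)) (i - 1)) ((x(n := y)) i)) = (\<Prod>i\<in>{1..<n}. b (x (i - 1)) (x i))"
    by (intro prod.cong) auto
  moreover have "(\<Prod>i\<in>{1..<Suc n}. b ((x(n := y)) (i - 1)) ((x(n := y)) i))
      = (\<Prod>i\<in>{1..<n}. b ((x(n := y)) (i - 1)) ((x(n := y)) i)) * b ((x(n := y)) (n - 1)) ((x(n := y)) n)"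
    by (rule prod.atLeastLessThan_Suc[OF n])
  moreover have "(x(n := y)) 0 = x 0" "(x(n := y)) (n - 1) = x (n - 1)" "(x(n := y)) n = y"
    using n by auto
  ultimately show ?thesis
    unfolding chain_weight_def by simp
qed

lemma ennreal_series_bounded:
  fixes f :: "nat \<Rightarrow> ennreal"
  assumes B: "0 \<le> B" and le: "\<And>N. (\<Sum>k<N. f k) \<le> ennreal B"
  shows "\<And>k. f k < \<top>" "summable (\<lambda>k. enn2real (f k))" "(\<Sum>k. enn2real (f k)) \<le> B"
proof -
  show fin: "f k < \<top>" for k
  proof -
    have "f k \<le> (\<Sum>i<Suc k. f i)" by (rule member_le_sum) auto
    also have "\<dots> \<le> ennreal B" by (rule le)
    finally show ?thesis using ennreal_less_top le_less_trans by blast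
  qed
  have pb: "(\<Sum>k<N. enn2real (f k)) \<le> B" for N
    using enn2real_leI[OF B le] fin by (simp add: enn2real_sum)
  show "summable (\<lambda>k. enn2real (f k))"
    by (rule summableI_nonneg_bounded[OF _ pb]) simp
  then show "(\<Sum>k. enn2real (f k)) \<le> B" by (rule suminf_le_const[OF _ pb])
qed

locale simplex_kernel =
  fixes a :: "real \<Rightarrow> real" and b :: "real \<Rightarrow> real \<Rightarrow> real"
  assumes a_nonneg: "\<And>v. 0 \<le> a v" and b_nonneg: "\<And>s y. 0 \<le> b s y"
    and a_measurable[measurable]: "a \<in> borel_measurable borel"
    and b_measurable: "(\<lambda>p. b (fst p) (snd p)) \<in> borel_measurable (lborel \<Otimes>\<^sub>M lborel)"
begin

abbreviation "PM n \<equiv> PiM {..<n} (\<lambda>_::nat. lborel :: real measure)"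

lemma chain_weight_nonneg: "0 \<le> chain_weight a b n u"
  unfolding chain_weight_def using a_nonneg b_nonneg by (intro mult_nonneg_nonneg prod_nonneg) auto

lemma chain_weight_measurable:
  assumes "n \<ge> 1"
  shows "chain_weight a b n \<in> borel_measurable (PM n)"
proof -
  have c: "(\<lambda>u. u i) \<in> PM n \<rightarrow>\<^sub>M lborel" if "i < n" for i
    using measurable_component_real[OF that] by (simp add: measurable_cong_sets[OF refl sets_lborel])
  have "(\<lambda>u. a (u 0) * (\<Prod>i\<in>{1..<n}. b (u (i - 1)) (u i))) \<in> borel_measurable (PM n)"
  proof (intro borel_measurable_times borel_measurable_prod)
    show "(\<lambda>u. a (u 0)) \<in> borel_measurable (PM n)"
      using measurable_compose[OF measurable_component_real a_measurable, of 0 n] assms by simp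
    fix i assume "i \<in> {1..<n}"
    then have "(\<lambda>u. (u (i - 1), u i)) \<in> PM n \<rightarrow>\<^sub>M lborel \<Otimes>\<^sub>M lborel"
      by (intro measurable_Pair c) auto
    from measurable_compose[OF this b_measurable]
    show "(\<lambda>u. b (u (i - 1)) (u i)) \<in> borel_measurable (PM n)" by simp
  qed
  then show ?thesis unfolding chain_weight_def[abs_def] .
qed

lemma simplex_integrand_measurable:
  assumes "n \<ge> 1" "g \<in> borel_measurable borel"
  shows "(\<lambda>u. indicator (ord_simplex n t0) u * ennreal (chain_weight a b n u) * g (u (n - 1)))
    \<in> borel_measurable (PM n)"
proof -
  have "n - 1 < n" using assms(1) by simp
  then show ?thesis
    using chain_weight_measurable[OF assms(1)] ord_simplex_sets[of n t0]
      measurable_compose[OF measurable_component_real assms(2)]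
    by measurable
qed

lemma kernel_integrand_measurable:
  assumes "g \<in> borel_measurable borel"
  shows "(\<lambda>(s, y). indicator {s..t0} y * ennreal (b s y) * g y) \<in> borel_measurable (borel \<Otimes>\<^sub>M lborel)"
proof -
  have [measurable]: "(\<lambda>p. b (fst p) (snd p)) \<in> borel_measurable (borel \<Otimes>\<^sub>M lborel)"
    using b_measurable
    by (subst (asm) measurable_cong_sets[OF sets_pair_measure_cong[OF sets_lborel refl] refl])
  have "{p \<in> space (borel \<Otimes>\<^sub>M lborel). fst p \<le> snd p \<and> snd p \<le> t0} \<in> sets (borel \<Otimes>\<^sub>M (lborel :: real measure))"
    by measurable
  then have [measurable]: "(\<lambda>p::real \<times> real. indicator {fst p..t0} (snd p) :: ennreal)
      \<in> borel_measurable (borel \<Otimes>\<^sub>M lborel)"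
    by (rule measurable_cong[THEN iffD1, rotated, OF borel_measurable_indicator])
      (auto simp: indicator_def space_pair_measure)
  show ?thesis using assms unfolding split_beta' by measurable
qed

lemma kernel_measurable: "g \<in> borel_measurable borel \<Longrightarrow> kernel b t0 g \<in> borel_measurable borel"
  unfolding kernel_def[abs_def]
  by (rule lborel.borel_measurable_nn_integral[OF kernel_integrand_measurable])

lemma neumann_sum_measurable: "g \<in> borel_measurable borel \<Longrightarrow> neumann_sum b t0 g N \<in> borel_measurable borel"
  by (induction N) (auto intro!: kernel_measurable borel_measurable_add)

lemma simplex_integral_add:
  assumes "n \<ge> 1" "f \<in> borel_measurable borel" "h \<in> borel_measurable borel"
  shows "simplex_integral a b t0 n (\<lambda>s. f s + h s) = simplex_integral a b t0 n f + simplex_integral a b t0 n h"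
  unfolding simplex_integral_def
  by (subst nn_integral_add[symmetric], (rule simplex_integrand_measurable[OF assms(1)], fact)+)
    (auto intro!: nn_integral_cong simp: distrib_left)

lemma simplex_integral_cmult:
  assumes "n \<ge> 1" "f \<in> borel_measurable borel"
  shows "simplex_integral a b t0 n (\<lambda>s. c * f s) = c * simplex_integral a b t0 n f"
  unfolding simplex_integral_def
  by (subst nn_integral_cmult[symmetric], rule simplex_integrand_measurable[OF assms])
    (auto intro!: nn_integral_cong simp: ac_simps)

lemma simplex_integral_mono:
  assumes "\<And>s. 0 \<le> s \<Longrightarrow> s \<le> t0 \<Longrightarrow> f s \<le> h s" "n \<ge> 1"
  shows "simplex_integral a b t0 n f \<le> simplex_integral a b t0 n h"
  unfolding simplex_integral_def
proof (rule nn_integral_mono)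
  fix u
  show "indicator (ord_simplex n t0) u * ennreal (chain_weight a b n u) * f (u (n - 1))
     \<le> indicator (ord_simplex n t0) u * ennreal (chain_weight a b n u) * h (u (n - 1))"
  proof (cases "u \<in> ord_simplex n t0")
    case True
    have "n - 1 < n" using assms(2) by simp
    then show ?thesis
      using assms(1) ord_simplex_bounds[OF True] by (auto intro: mult_left_mono)
  qed simp
qed

lemma simplex_integral_one:
  assumes "g \<in> borel_measurable borel"
  shows "simplex_integral a b t0 1 g = (\<integral>\<^sup>+v. indicator {0..t0} v * ennreal (a v) * g v \<partial>lborel)"
proof -
  interpret product_sigma_finite "\<lambda>_::nat. lborel :: real measure" by standard
  let ?F = "\<lambda>v. indicator {0..t0} v * ennreal (a v) * g v"
  have "simplex_integral a b t0 1 g = (\<integral>\<^sup>+u. ?F (u 0) \<partial>PM 1)"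
    unfolding simplex_integral_def
    by (rule nn_integral_cong) (auto simp: chain_weight_def indicator_def ord_simplex_def space_PiM)
  also have "{..<1::nat} = {0}" by auto
  also have "(\<integral>\<^sup>+u. ?F (u 0) \<partial>PiM {0::nat} (\<lambda>_. lborel)) = (\<integral>\<^sup>+v. ?F v \<partial>lborel)"
    using assms by (intro product_nn_integral_singleton) simp
  finally show ?thesis .
qed

lemma simplex_integral_Suc:
  assumes n: "n \<ge> 1" and gm: "g \<in> borel_measurable borel"
  shows "simplex_integral a b t0 (Suc n) g = simplex_integral a b t0 n (kernel b t0 g)"
proof -
  interpret product_sigma_finite "\<lambda>_::nat. lborel :: real measure" by standard
  have ins: "{..<Suc n} = insert n {..<n}" by auto
  let ?f = "\<lambda>u. indicator (ord_simplex (Suc n) t0) u * ennreal (chain_weight a b (Suc n) u) * g (u (Suc n - 1))"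
  have "simplex_integral a b t0 (Suc n) g = (\<integral>\<^sup>+x. (\<integral>\<^sup>+y. ?f (x(n := y)) \<partial>lborel) \<partial>PM n)"
    unfolding simplex_integral_def ins
    by (rule product_nn_integral_insert) (use simplex_integrand_measurable[OF _ gm, of "Suc n"] ins in auto)
  also have "\<dots> = (\<integral>\<^sup>+x. indicator (ord_simplex n t0) x * ennreal (chain_weight a b n x)
      * kernel b t0 g (x (n - 1)) \<partial>PM n)"
  proof (rule nn_integral_cong)
    fix x assume "x \<in> space (PM n)"
    then have x: "x \<in> {..<n} \<rightarrow>\<^sub>E UNIV" by (simp add: space_PiM)
    have "(\<integral>\<^sup>+y. ?f (x(n := y)) \<partial>lborel) = (\<integral>\<^sup>+y. (indicator (ord_simplex n t0) x
        * ennreal (chain_weight a b n x)) * (indicator {x (n - 1)..t0} y * ennreal (b (x (n - 1)) y) * g y) \<partial>lborel)"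
      using chain_weight_nonneg[of n x] b_nonneg[of "x (n - 1)"]
      by (intro nn_integral_cong)
        (simp add: ord_simplex_upd_iff[OF x n] chain_weight_upd[OF n] indicator_def ennreal_mult mult.assoc)
    also have "\<dots> = indicator (ord_simplex n t0) x * ennreal (chain_weight a b n x) * kernel b t0 g (x (n - 1))"
      using measurable_Pair2[OF kernel_integrand_measurable[OF gm], of "x (n - 1)"]
      unfolding kernel_def by (subst nn_integral_cmult) simp_all
    finally show "(\<integral>\<^sup>+y. ?f (x(n := y)) \<partial>lborel)
        = indicator (ord_simplex n t0) x * ennreal (chain_weight a b n x) * kernel b t0 g (x (n - 1))" .
  qed
  also have "\<dots> = simplex_integral a b t0 n (kernel b t0 g)" unfolding simplex_integral_def by simp
  finally show ?thesis .
qed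

lemma sum_simplex_integral_eq_neumann_sum:
  assumes "n \<ge> 1" "g \<in> borel_measurable borel"
  shows "(\<Sum>k<N. simplex_integral a b t0 (n + k) g) = simplex_integral a b t0 n (neumann_sum b t0 g N)"
  using assms(1)
proof (induction N arbitrary: n)
  case 0
  then show ?case by (simp add: simplex_integral_def)
next
  case (Suc N)
  have "(\<Sum>k<Suc N. simplex_integral a b t0 (n + k) g)
      = simplex_integral a b t0 n g + (\<Sum>k<N. simplex_integral a b t0 (Suc n + k) g)"
    by (subst sum.lessThan_Suc_shift) simp
  also have "(\<Sum>k<N. simplex_integral a b t0 (Suc n + k) g) = simplex_integral a b t0 (Suc n) (neumann_sum b t0 g N)"
    using Suc.IH[of "Suc n"] Suc.prems by simp
  also have "\<dots> = simplex_integral a b t0 n (kernel b t0 (neumann_sum b t0 g N))"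
    by (rule simplex_integral_Suc[OF Suc.prems neumann_sum_measurable[OF assms(2)]])
  also have "simplex_integral a b t0 n g + \<dots> = simplex_integral a b t0 n (neumann_sum b t0 g (Suc N))"
    using simplex_integral_add[OF Suc.prems assms(2) kernel_measurable[OF neumann_sum_measurable[OF assms(2)]]]
    by simp
  finally show ?case .
qed

lemma kernel_mono:
  assumes "\<And>y. s \<le> y \<Longrightarrow> y \<le> t0 \<Longrightarrow> f y \<le> h y"
  shows "kernel b t0 f s \<le> kernel b t0 h s"
  unfolding kernel_def
  by (rule nn_integral_mono) (use assms in \<open>auto simp: indicator_def intro!: mult_left_mono\<close>)

lemma neumann_sum_le_supersolution:
  assumes "\<And>s. 0 \<le> s \<Longrightarrow> s \<le> t0 \<Longrightarrow> g s + kernel b t0 \<phi> s \<le> \<phi> s"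
  shows "0 \<le> s \<Longrightarrow> s \<le> t0 \<Longrightarrow> neumann_sum b t0 g N s \<le> \<phi> s"
proof (induction N arbitrary: s)
  case (Suc N)
  have "kernel b t0 (neumann_sum b t0 g N) s \<le> kernel b t0 \<phi> s"
    using Suc by (intro kernel_mono) auto
  then have "g s + kernel b t0 (neumann_sum b t0 g N) s \<le> g s + kernel b t0 \<phi> s" by (rule add_left_mono)
  also have "\<dots> \<le> \<phi> s" using assms Suc.prems by blast
  finally show ?case by simp
qed simp

lemma sum_simplex_integral_le_supersolution:
  assumes "g \<in> borel_measurable borel"
    and "\<And>s. 0 \<le> s \<Longrightarrow> s \<le> t0 \<Longrightarrow> g s + kernel b t0 \<phi> s \<le> \<phi> s"
  shows "(\<Sum>k<N. simplex_integral a b t0 (Suc k) g) \<le> simplex_integral a b t0 1 \<phi>"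
proof -
  have "(\<Sum>k<N. simplex_integral a b t0 (Suc k) g) = simplex_integral a b t0 1 (neumann_sum b t0 g N)"
    using sum_simplex_integral_eq_neumann_sum[OF _ assms(1), where n=1 and N=N] by simp
  also have "\<dots> \<le> simplex_integral a b t0 1 \<phi>"
    by (intro simplex_integral_mono neumann_sum_le_supersolution[OF assms(2)]) auto
  finally show ?thesis .
qed

end

lemma simplex_integral_split:
  assumes "simplex_kernel a b" "n \<ge> 1" "t0 \<le> t0'" "g \<in> borel_measurable borel"
  shows "simplex_integral a b t0' n g
    = simplex_integral a b t0 n g + simplex_integral a b t0' n (\<lambda>s. indicator {t0<..} s * g s)"
proof -
  interpret simplex_kernel a b by fact
  have "(\<lambda>s. indicator {t0<..} s * g s) \<in> borel_measurable borel" using assms(4) by measurable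
  then have "simplex_integral a b t0 n g + simplex_integral a b t0' n (\<lambda>s. indicator {t0<..} s * g s)
    = (\<integral>\<^sup>+u. indicator (ord_simplex n t0) u * ennreal (chain_weight a b n u) * g (u (n - 1))
          + indicator (ord_simplex n t0') u * ennreal (chain_weight a b n u)
            * (indicator {t0<..} (u (n - 1)) * g (u (n - 1))) \<partial>PM n)"
    unfolding simplex_integral_def
    by (intro nn_integral_add[symmetric] simplex_integrand_measurable assms)
  also have "\<dots> = simplex_integral a b t0' n g"
    unfolding simplex_integral_def
  proof (rule nn_integral_cong)
    fix u
    show "indicator (ord_simplex n t0) u * ennreal (chain_weight a b n u) * g (u (n - 1))
        + indicator (ord_simplex n t0') u * ennreal (chain_weight a b n u)
          * (indicator {t0<..} (u (n - 1)) * g (u (n - 1)))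
      = indicator (ord_simplex n t0') u * ennreal (chain_weight a b n u) * g (u (n - 1))"
      by (cases "u \<in> ord_simplex n t0'"; cases "t0 < u (n - 1)")
        (auto simp: indicator_def ord_simplex_last_iff[OF assms(2,3)])
  qed
  finally show ?thesis by simp
qed

section \<open>Jump densities along the characteristics\<close>

definition clip :: "real \<Rightarrow> real \<Rightarrow> real \<Rightarrow> real" where
  "clip a b x = max a (min b x)"

lemma clip_eq: "a \<le> x \<Longrightarrow> x \<le> b \<Longrightarrow> clip a b x = x"
  by (auto simp: clip_def)

lemma continuous_on_clip[continuous_intros]:
  "continuous_on S f \<Longrightarrow> continuous_on S g \<Longrightarrow> continuous_on S h
    \<Longrightarrow> continuous_on S (\<lambda>x. clip (g x) (h x) (f x))"
  unfolding clip_def by (intro continuous_intros)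

definition rate_i :: "((real \<times> real) \<Rightarrow> real \<Rightarrow> real) \<Rightarrow> (real \<times> real \<Rightarrow> real) \<Rightarrow> real \<Rightarrow> real \<Rightarrow> real" where
  "rate_i \<theta> w z v = w (\<theta> (z, 0) v, v)"

definition rate_b :: "((real \<times> real) \<Rightarrow> real \<Rightarrow> real) \<Rightarrow> (real \<times> real \<Rightarrow> real) \<Rightarrow> real \<Rightarrow> real \<Rightarrow> real" where
  "rate_b \<theta> w s v = w (\<theta> (0, s) v, v)"

lemma Omega_i_rate_i: "Omega_i \<theta> w z t = integral {0..t} (rate_i \<theta> w z)"
  unfolding Omega_i_def rate_i_def by simp

lemma Omega_b_rate_b: "Omega_b \<theta> w s t = integral {s..t} (rate_b \<theta> w s)"
  unfolding Omega_b_def rate_b_def by simp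

lemma Omega_i_zero [simp]: "Omega_i \<theta> w z 0 = 0"
  by (simp add: Omega_i_def)

lemma Omega_b_self [simp]: "Omega_b \<theta> w s s = 0"
  by (simp add: Omega_b_def)

text \<open>Clipping the arguments extends the densities continuously from their natural domains
  (\<open>[0,1] \<times> [0,T]\<close>, resp. the time triangle) to the whole plane; this makes them Borel measurable
  and integrable over whole lines.\<close>

definition first_jump_density ::
  "((real \<times> real) \<Rightarrow> real \<Rightarrow> real) \<Rightarrow> (real \<times> real \<Rightarrow> real) \<Rightarrow> real \<Rightarrow> real \<Rightarrow> real \<Rightarrow> real" where
  "first_jump_density \<theta> w T z v =
     rate_i \<theta> w (clip 0 1 z) (clip 0 T v) * exp (- Omega_i \<theta> w (clip 0 1 z) (clip 0 T v))"

definition jump_density ::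
  "((real \<times> real) \<Rightarrow> real \<Rightarrow> real) \<Rightarrow> (real \<times> real \<Rightarrow> real) \<Rightarrow> real \<Rightarrow> real \<Rightarrow> real \<Rightarrow> real" where
  "jump_density \<theta> w T s y =
     rate_b \<theta> w (clip 0 T s) (clip (clip 0 T s) T y)
     * exp (- Omega_b \<theta> w (clip 0 T s) (clip (clip 0 T s) T y))"

definition survival_b :: "((real \<times> real) \<Rightarrow> real \<Rightarrow> real) \<Rightarrow> (real \<times> real \<Rightarrow> real) \<Rightarrow> real \<Rightarrow> real \<Rightarrow> real" where
  "survival_b \<theta> w t s = exp (- Omega_b \<theta> w (clip 0 t s) t)"

definition survival_i :: "((real \<times> real) \<Rightarrow> real \<Rightarrow> real) \<Rightarrow> (real \<times> real \<Rightarrow> real) \<Rightarrow> real \<Rightarrow> real \<Rightarrow> real" where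
  "survival_i \<theta> w t z = exp (- Omega_i \<theta> w (clip 0 1 z) t)"

lemma mem_Delta_bounds:
  assumes "((y, s), t) \<in> Delta T"
  shows "0 \<le> y" "y \<le> 1" "0 \<le> s" "s \<le> t" "t \<le> T"
  using assms unfolding Delta_def Gamma_t_def by auto

lemma Delta_cases:
  assumes "x \<in> Delta T"
  obtains y t where "x = ((y, 0), t)" "0 \<le> t" "t \<le> T" "0 \<le> y" "y \<le> 1"
  | s t where "x = ((0, s), t)" "0 \<le> t" "t \<le> T" "0 < s" "s \<le> t"
  using assms unfolding Delta_def Gamma_t_def by (cases x) (auto simp: less_eq_real_def)

locale theta_setting =
  fixes T :: real and W :: "(real \<times> real \<Rightarrow> real) set" and \<theta> :: "(real \<times> real) \<Rightarrow> real \<Rightarrow> real"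
  assumes T_pos: "0 < T" and W_adm: "admissible_W T W" and theta: "\<theta> \<in> Theta T"
begin

lemma initial_in_Delta: "0 \<le> z \<Longrightarrow> z \<le> 1 \<Longrightarrow> 0 \<le> v \<Longrightarrow> v \<le> T \<Longrightarrow> ((z, 0), v) \<in> Delta T"
  unfolding Delta_def Gamma_t_def by auto

lemma boundary_in_Delta: "0 \<le> s \<Longrightarrow> s \<le> v \<Longrightarrow> v \<le> T \<Longrightarrow> ((0, s), v) \<in> Delta T"
  unfolding Delta_def Gamma_t_def by auto

lemma theta_continuous: "continuous_on (Delta T) (\<lambda>(\<gamma>, t). \<theta> \<gamma> t)"
  using theta unfolding Theta_def by blast

lemma theta_range: "(\<gamma>, t) \<in> Delta T \<Longrightarrow> 0 \<le> \<theta> \<gamma> t \<and> \<theta> \<gamma> t \<le> 1"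
  using theta unfolding Theta_def by fastforce

lemma theta_initial_in_rect: "0 \<le> z \<Longrightarrow> z \<le> 1 \<Longrightarrow> 0 \<le> v \<Longrightarrow> v \<le> T \<Longrightarrow> (\<theta> (z, 0) v, v) \<in> rect T"
  using theta_range[OF initial_in_Delta] by (auto simp: mem_rect_iff)

lemma theta_boundary_in_rect: "0 \<le> s \<Longrightarrow> s \<le> v \<Longrightarrow> v \<le> T \<Longrightarrow> (\<theta> (0, s) v, v) \<in> rect T"
  using theta_range[OF boundary_in_Delta] by (auto simp: mem_rect_iff)

lemma continuous_on_theta_initial: "continuous_on ({0..1} \<times> {0..T}) (\<lambda>x. \<theta> (fst x, 0) (snd x))"
  by (intro continuous_on_compose_pair[OF theta_continuous] continuous_intros) (auto intro: initial_in_Delta)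

lemma continuous_on_theta_boundary: "continuous_on (time_triangle T) (\<lambda>x. \<theta> (0, fst x) (snd x))"
  by (intro continuous_on_compose_pair[OF theta_continuous] continuous_intros)
    (auto intro: boundary_in_Delta simp: time_triangle_def)

lemma continuous_on_theta_initial_line: "0 \<le> z \<Longrightarrow> z \<le> 1 \<Longrightarrow> continuous_on {0..T} (\<theta> (z, 0))"
  by (rule continuous_on_compose_pair[OF theta_continuous, of _ "\<lambda>_. (z, 0)" "\<lambda>u. u", simplified])
    (auto intro!: continuous_intros initial_in_Delta)

lemma continuous_on_theta_boundary_line: "0 \<le> s \<Longrightarrow> continuous_on {s..T} (\<theta> (0, s))"
  by (rule continuous_on_compose_pair[OF theta_continuous, of _ "\<lambda>_. (0, s)" "\<lambda>u. u", simplified])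
    (auto intro!: continuous_intros boundary_in_Delta)

context
  fixes w assumes w: "w \<in> W"
begin

lemma supnorm_w_nonneg: "0 \<le> supnorm T w"
  using supnorm_nonneg[OF W_adm w] T_pos by simp

lemma rate_i_bounds:
  "0 \<le> z \<Longrightarrow> z \<le> 1 \<Longrightarrow> 0 \<le> v \<Longrightarrow> v \<le> T \<Longrightarrow> 0 \<le> rate_i \<theta> w z v \<and> rate_i \<theta> w z v \<le> supnorm T w"
  unfolding rate_i_def
  using admissible_W_nonneg[OF W_adm w theta_initial_in_rect] abs_le_supnorm[OF W_adm w theta_initial_in_rect]
  by auto

lemma rate_b_bounds:
  "0 \<le> s \<Longrightarrow> s \<le> v \<Longrightarrow> v \<le> T \<Longrightarrow> 0 \<le> rate_b \<theta> w s v \<and> rate_b \<theta> w s v \<le> supnorm T w"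
  unfolding rate_b_def
  using admissible_W_nonneg[OF W_adm w theta_boundary_in_rect] abs_le_supnorm[OF W_adm w theta_boundary_in_rect]
  by auto

lemma continuous_on_rate_i: "continuous_on ({0..1} \<times> {0..T}) (\<lambda>(z, v). rate_i \<theta> w z v)"
  unfolding rate_i_def split_beta'
  using admissible_W_continuous_on[OF W_adm w] continuous_on_theta_initial
  by (intro continuous_on_compose2[OF admissible_W_continuous_on[OF W_adm w]] continuous_intros)
    (auto intro: theta_initial_in_rect)

lemma continuous_on_rate_b: "continuous_on (time_triangle T) (\<lambda>(s, v). rate_b \<theta> w s v)"
  unfolding rate_b_def split_beta'
  using continuous_on_theta_boundary
  by (intro continuous_on_compose2[OF admissible_W_continuous_on[OF W_adm w]] continuous_intros)
    (auto intro: theta_boundary_in_rect simp: time_triangle_def)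

lemma continuous_on_rate_i_line: "0 \<le> z \<Longrightarrow> z \<le> 1 \<Longrightarrow> continuous_on {0..T} (rate_i \<theta> w z)"
  by (rule continuous_on_compose_pair[OF continuous_on_rate_i, of _ "\<lambda>_. z" "\<lambda>v. v", simplified])
    (auto intro!: continuous_intros)

lemma continuous_on_rate_b_line: "0 \<le> s \<Longrightarrow> s \<le> T \<Longrightarrow> continuous_on {s..T} (rate_b \<theta> w s)"
  by (rule continuous_on_compose_pair[OF continuous_on_rate_b, of _ "\<lambda>_. s" "\<lambda>v. v", simplified])
    (auto intro!: continuous_intros simp: time_triangle_def)

lemma continuous_on_Omega_i: "continuous_on ({0..1} \<times> {0..T}) (\<lambda>(z, v). Omega_i \<theta> w z v)"
  unfolding Omega_i_rate_i using continuous_on_integral_upper_param[OF continuous_on_rate_i] T_pos by simp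

lemma continuous_on_Omega_b: "continuous_on (time_triangle T) (\<lambda>(s, v). Omega_b \<theta> w s v)"
  unfolding Omega_b_rate_b using continuous_on_integral_time_triangle[OF continuous_on_rate_b] T_pos by simp

lemma continuous_first_jump_density: "continuous_on UNIV (\<lambda>(z, v). first_jump_density \<theta> w T z v)"
proof -
  have c: "continuous_on ({0..1} \<times> {0..T}) (\<lambda>(z, v). rate_i \<theta> w z v * exp (- Omega_i \<theta> w z v))"
    using continuous_on_rate_i continuous_on_Omega_i unfolding split_beta' by (intro continuous_intros)
  then show ?thesis
    unfolding first_jump_density_def split_beta'
    using T_pos
    by (intro continuous_on_compose_pair[where h="\<lambda>z v. rate_i \<theta> w z v * exp (- Omega_i \<theta> w z v)", OF c]
      continuous_intros) (auto simp: clip_def)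
qed

lemma continuous_jump_density: "continuous_on UNIV (\<lambda>(s, y). jump_density \<theta> w T s y)"
proof -
  have c: "continuous_on (time_triangle T) (\<lambda>(s, v). rate_b \<theta> w s v * exp (- Omega_b \<theta> w s v))"
    using continuous_on_rate_b continuous_on_Omega_b unfolding split_beta' by (intro continuous_intros)
  then show ?thesis
    unfolding jump_density_def split_beta'
    using T_pos
    by (intro continuous_on_compose_pair[where h="\<lambda>s v. rate_b \<theta> w s v * exp (- Omega_b \<theta> w s v)", OF c]
      continuous_intros) (auto simp: clip_def time_triangle_def)
qed

lemma continuous_survival_b: "0 \<le> t \<Longrightarrow> t \<le> T \<Longrightarrow> continuous_on UNIV (survival_b \<theta> w t)"
  unfolding survival_b_def
  by (intro continuous_intros continuous_on_compose_pair[OF continuous_on_Omega_b])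
    (auto simp: clip_def time_triangle_def)

lemma continuous_survival_i: "0 \<le> t \<Longrightarrow> t \<le> T \<Longrightarrow> continuous_on UNIV (survival_i \<theta> w t)"
  unfolding survival_i_def
  by (intro continuous_intros continuous_on_compose_pair[OF continuous_on_Omega_i])
    (auto simp: clip_def)

lemma Omega_i_bounds:
  assumes "0 \<le> z" "z \<le> 1" "0 \<le> \<alpha>" "\<alpha> \<le> \<beta>" "\<beta> \<le> T"
  shows "0 \<le> Omega_i \<theta> w z \<alpha>" "Omega_i \<theta> w z \<alpha> \<le> Omega_i \<theta> w z \<beta>"
    "Omega_i \<theta> w z \<beta> - Omega_i \<theta> w z \<alpha> \<le> supnorm T w * (\<beta> - \<alpha>)"
  using integral_split_bounds[where C="supnorm T w", OF continuous_on_rate_i_line[OF assms(1,2)] _ assms(3-5)]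
    rate_i_bounds[OF assms(1,2)]
  unfolding Omega_i_rate_i by auto

lemma Omega_b_bounds:
  assumes "0 \<le> s" "s \<le> \<alpha>" "\<alpha> \<le> \<beta>" "\<beta> \<le> T"
  shows "0 \<le> Omega_b \<theta> w s \<alpha>" "Omega_b \<theta> w s \<alpha> \<le> Omega_b \<theta> w s \<beta>"
    "Omega_b \<theta> w s \<beta> - Omega_b \<theta> w s \<alpha> \<le> supnorm T w * (\<beta> - \<alpha>)"
  using integral_split_bounds[where C="supnorm T w", OF continuous_on_rate_b_line[of s] _ assms(2-4)] rate_b_bounds[OF assms(1)] assms
  unfolding Omega_b_rate_b by auto

lemma first_jump_density_eq:
  "0 \<le> z \<Longrightarrow> z \<le> 1 \<Longrightarrow> 0 \<le> v \<Longrightarrow> v \<le> T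
    \<Longrightarrow> first_jump_density \<theta> w T z v = rate_i \<theta> w z v * exp (- Omega_i \<theta> w z v)"
  unfolding first_jump_density_def by (simp add: clip_eq)

lemma jump_density_eq:
  "0 \<le> s \<Longrightarrow> s \<le> v \<Longrightarrow> v \<le> T \<Longrightarrow> jump_density \<theta> w T s v = rate_b \<theta> w s v * exp (- Omega_b \<theta> w s v)"
  unfolding jump_density_def by (simp add: clip_eq)

lemma survival_b_eq: "0 \<le> s \<Longrightarrow> s \<le> t \<Longrightarrow> survival_b \<theta> w t s = exp (- Omega_b \<theta> w s t)"
  unfolding survival_b_def by (simp add: clip_eq)

lemma survival_b_mono_lipschitz:
  assumes "0 \<le> s" "s \<le> t" "t \<le> t'" "t' \<le> T"
  shows "survival_b \<theta> w t' s \<le> survival_b \<theta> w t s"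
    "survival_b \<theta> w t s \<le> survival_b \<theta> w t' s + supnorm T w * (t' - t) * survival_b \<theta> w t s"
proof -
  have o: "Omega_b \<theta> w s t \<le> Omega_b \<theta> w s t'" "Omega_b \<theta> w s t' - Omega_b \<theta> w s t \<le> supnorm T w * (t' - t)"
    using Omega_b_bounds[OF assms] by auto
  then have "exp (- Omega_b \<theta> w s t) - exp (- (Omega_b \<theta> w s t + (Omega_b \<theta> w s t' - Omega_b \<theta> w s t)))
      \<le> exp (- Omega_b \<theta> w s t) * (supnorm T w * (t' - t))"
    by (intro exp_minus_diff_le) auto
  then show "survival_b \<theta> w t' s \<le> survival_b \<theta> w t s"
    "survival_b \<theta> w t s \<le> survival_b \<theta> w t' s + supnorm T w * (t' - t) * survival_b \<theta> w t s"
    using assms o by (simp_all add: survival_b_eq algebra_simps)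
qed

lemma first_jump_density_bounds: "0 \<le> first_jump_density \<theta> w T z v \<and> first_jump_density \<theta> w T z v \<le> supnorm T w"
proof -
  let ?z = "clip 0 1 z" and ?v = "clip 0 T v"
  have c: "0 \<le> ?z" "?z \<le> 1" "0 \<le> ?v" "?v \<le> T"
    using T_pos by (auto simp: clip_def)
  have "exp (- Omega_i \<theta> w ?z ?v) \<le> 1"
    using Omega_i_bounds(1)[OF c(1,2) c(3) order_refl c(4)] by simp
  then show ?thesis
    using rate_i_bounds[OF c] unfolding first_jump_density_def
    by (auto intro: mult_le_one order_trans[OF mult_left_le])
qed

lemma jump_density_nonneg: "0 \<le> jump_density \<theta> w T s y"
proof -
  have "0 \<le> clip 0 T s" "clip 0 T s \<le> clip (clip 0 T s) T y" "clip (clip 0 T s) T y \<le> T"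
    using T_pos by (auto simp: clip_def)
  then show ?thesis unfolding jump_density_def using rate_b_bounds by simp
qed

lemma nn_integral_first_jump_density:
  assumes "0 \<le> z" "z \<le> 1" "0 \<le> \<alpha>" "\<alpha> \<le> \<beta>" "\<beta> \<le> T"
  shows "(\<integral>\<^sup>+v. indicator {\<alpha>..\<beta>} v * ennreal (first_jump_density \<theta> w T z v) \<partial>lborel)
    = ennreal (exp (- Omega_i \<theta> w z \<alpha>) - exp (- Omega_i \<theta> w z \<beta>))"
  unfolding Omega_i_rate_i
  using assms rate_i_bounds[OF assms(1,2)]
  by (intro nn_integral_hazard[OF continuous_on_rate_i_line[OF assms(1,2)] assms(3-5)])
    (auto simp: first_jump_density_eq Omega_i_rate_i)

lemma nn_integral_jump_density:
  assumes "0 \<le> s" "s \<le> \<alpha>" "\<alpha> \<le> \<beta>" "\<beta> \<le> T"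
  shows "(\<integral>\<^sup>+y. indicator {\<alpha>..\<beta>} y * ennreal (jump_density \<theta> w T s y) \<partial>lborel)
    = ennreal (exp (- Omega_b \<theta> w s \<alpha>) - exp (- Omega_b \<theta> w s \<beta>))"
  unfolding Omega_b_rate_b
  using assms rate_b_bounds[OF assms(1)]
  by (intro nn_integral_hazard[OF continuous_on_rate_b_line assms(2-4)])
    (auto simp: jump_density_eq Omega_b_rate_b)

lemma jump_density_measurable: "jump_density \<theta> w T s \<in> borel_measurable borel"
  by (rule borel_measurable_continuous_onI,
      rule continuous_on_compose_pair[OF continuous_jump_density, of _ "\<lambda>_. s" "\<lambda>v. v", simplified])

lemma simplex_kernel_densities: "simplex_kernel (first_jump_density \<theta> w T z) (jump_density \<theta> w T)"
proof
  show "0 \<le> first_jump_density \<theta> w T z v" for v using first_jump_density_bounds by blast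
  show "0 \<le> jump_density \<theta> w T s y" for s y by (rule jump_density_nonneg)
  have "continuous_on UNIV (first_jump_density \<theta> w T z)"
    by (rule continuous_on_compose_pair[OF continuous_first_jump_density, of _ "\<lambda>_. z" "\<lambda>v. v", simplified])
  then show "first_jump_density \<theta> w T z \<in> borel_measurable borel"
    by (rule borel_measurable_continuous_onI)
  have "(\<lambda>p. jump_density \<theta> w T (fst p) (snd p)) \<in> borel_measurable borel"
    using continuous_jump_density by (intro borel_measurable_continuous_onI) (simp add: split_beta')
  then show "(\<lambda>p. jump_density \<theta> w T (fst p) (snd p)) \<in> borel_measurable (lborel \<Otimes>\<^sub>M lborel)"
    by (simp add: lborel_prod)
qed

end

end

section \<open>The series of jump integrals\<close>

definition jump_term ::
  "((real \<times> real) \<Rightarrow> real \<Rightarrow> real) \<Rightarrow> (real \<times> real \<Rightarrow> real) \<Rightarrow> real \<Rightarrow> real \<Rightarrow> real \<Rightarrow> real \<Rightarrow> nat \<Rightarrow> real" where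
  "jump_term \<theta> w T z t0 t k = enn2real (simplex_integral (first_jump_density \<theta> w T z) (jump_density \<theta> w T)
     t0 (Suc k) (\<lambda>s. ennreal (survival_b \<theta> w t s)))"

definition jump_series ::
  "((real \<times> real) \<Rightarrow> real \<Rightarrow> real) \<Rightarrow> (real \<times> real \<Rightarrow> real) \<Rightarrow> real \<Rightarrow> real \<Rightarrow> real \<Rightarrow> real \<Rightarrow> real" where
  "jump_series \<theta> w T z t0 t = (\<Sum>k. jump_term \<theta> w T z t0 t k)"

context theta_setting
begin

context
  fixes w and z :: real
  assumes w: "w \<in> W" and z: "0 \<le> z" "z \<le> 1"
begin

interpretation simplex_kernel "first_jump_density \<theta> w T z" "jump_density \<theta> w T"
  by (rule simplex_kernel_densities[OF w])

abbreviation "jump_integral t0 t k \<equiv>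
  simplex_integral (first_jump_density \<theta> w T z) (jump_density \<theta> w T) t0 (Suc k) (\<lambda>s. ennreal (survival_b \<theta> w t s))"

lemma survival_b_measurable:
  "0 \<le> t \<Longrightarrow> t \<le> T \<Longrightarrow> (\<lambda>s. ennreal (survival_b \<theta> w t s)) \<in> borel_measurable borel"
  using borel_measurable_continuous_onI[OF continuous_survival_b[OF w]]
  by (rule measurable_compose[OF _ measurable_ennreal])

lemma kernel_const_one:
  "0 \<le> s \<Longrightarrow> s \<le> t0 \<Longrightarrow> t0 \<le> T
    \<Longrightarrow> kernel (jump_density \<theta> w T) t0 (\<lambda>_. 1) s = ennreal (1 - exp (- Omega_b \<theta> w s t0))"
  unfolding kernel_def using nn_integral_jump_density[OF w, of s s t0] by simp

lemma simplex_integral_const_one: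
  "0 \<le> t0 \<Longrightarrow> t0 \<le> T
    \<Longrightarrow> simplex_integral (first_jump_density \<theta> w T z) (jump_density \<theta> w T) t0 1 (\<lambda>_. 1)
      = ennreal (1 - exp (- Omega_i \<theta> w z t0))"
  using simplex_integral_one[of "\<lambda>_. 1" t0] nn_integral_first_jump_density[OF w z, of 0 t0] by simp

lemma one_minus_exp_Omega_i_bounds:
  assumes "0 \<le> t0" "t0 \<le> T"
  shows "0 \<le> 1 - exp (- Omega_i \<theta> w z t0)" "1 - exp (- Omega_i \<theta> w z t0) \<le> supnorm T w * t0"
proof -
  have o: "0 \<le> Omega_i \<theta> w z t0" "Omega_i \<theta> w z t0 \<le> supnorm T w * t0"
    using Omega_i_bounds[OF w z, of 0 t0] assms by auto
  then show "0 \<le> 1 - exp (- Omega_i \<theta> w z t0)" by simp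
  have "1 - Omega_i \<theta> w z t0 \<le> exp (- Omega_i \<theta> w z t0)"
    using exp_ge_add_one_self[of "- Omega_i \<theta> w z t0"] by simp
  then show "1 - exp (- Omega_i \<theta> w z t0) \<le> supnorm T w * t0" using o by linarith
qed

text \<open>The constant \<open>1\<close> is a supersolution: from \<open>s\<close>, either no jump occurs before \<open>t\<close> or a
  jump occurs before \<open>t\<^sub>0\<close>.\<close>
lemma sum_jump_integral_le:
  assumes "0 \<le> t0" "t0 \<le> t" "t \<le> T"
  shows "(\<Sum>k<N. jump_integral t0 t k) \<le> ennreal (1 - exp (- Omega_i \<theta> w z t0))"
proof -
  have "ennreal (survival_b \<theta> w t s) + kernel (jump_density \<theta> w T) t0 (\<lambda>_. 1) s \<le> 1"
    if s: "0 \<le> s" "s \<le> t0" for s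
  proof -
    have o: "0 \<le> Omega_b \<theta> w s t0" "Omega_b \<theta> w s t0 \<le> Omega_b \<theta> w s t"
      using Omega_b_bounds[OF w s(1) s(2), of t] assms by auto
    have "ennreal (survival_b \<theta> w t s) + kernel (jump_density \<theta> w T) t0 (\<lambda>_. 1) s
        = ennreal (exp (- Omega_b \<theta> w s t) + (1 - exp (- Omega_b \<theta> w s t0)))"
      using s assms o by (simp add: survival_b_eq[OF w] kernel_const_one ennreal_plus)
    also have "\<dots> \<le> ennreal 1" using o by (intro ennreal_leI) simp
    finally show ?thesis by simp
  qed
  then have "(\<Sum>k<N. jump_integral t0 t k)
      \<le> simplex_integral (first_jump_density \<theta> w T z) (jump_density \<theta> w T) t0 1 (\<lambda>_. 1)"
    using survival_b_measurable assms by (intro sum_simplex_integral_le_supersolution) auto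
  also have "\<dots> = ennreal (1 - exp (- Omega_i \<theta> w z t0))"
    using assms by (intro simplex_integral_const_one) auto
  finally show ?thesis .
qed

lemma jump_integrand_eq:
  assumes u: "u \<in> ord_simplex (Suc k) s" and "s \<le> t" "t \<le> T"
  shows "jump_integrand \<theta> w z t (Suc k) u
    = chain_weight (first_jump_density \<theta> w T z) (jump_density \<theta> w T) (Suc k) u * survival_b \<theta> w t (u k)"
proof -
  have m: "0 \<le> u i" "u i \<le> s" if "i < Suc k" for i using ord_simplex_bounds[OF u that] by auto
  have "(\<Prod>i\<in>{1..<Suc k}. jump_density \<theta> w T (u (i - 1)) (u i))
    = (\<Prod>i\<in>{1..<Suc k}. w (\<theta> (0, u (i - 1)) (u i), u i) * exp (- Omega_b \<theta> w (u (i - 1)) (u i)))"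
  proof (rule prod.cong)
    fix i assume i: "i \<in> {1..<Suc k}"
    have "0 \<le> u (i - 1)" "u (i - 1) \<le> u i" "u i \<le> T"
      using m[of "i - 1"] m[of i] ord_simplex_mono[OF u, of "i - 1" i] i assms by auto
    then show "jump_density \<theta> w T (u (i - 1)) (u i)
        = w (\<theta> (0, u (i - 1)) (u i), u i) * exp (- Omega_b \<theta> w (u (i - 1)) (u i))"
      by (simp add: jump_density_eq[OF w] rate_b_def)
  qed simp
  moreover have "first_jump_density \<theta> w T z (u 0) = w (\<theta> (z, 0) (u 0), u 0) * exp (- Omega_i \<theta> w z (u 0))"
    using first_jump_density_eq[OF w z, of "u 0"] m[of 0] assms by (simp add: rate_i_def)
  moreover have "survival_b \<theta> w t (u k) = exp (- Omega_b \<theta> w (u k) t)"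
    using survival_b_eq[OF w, of "u k" t] m[of k] assms by simp
  ultimately show ?thesis
    by (simp add: jump_integrand_def chain_weight_def)
qed

lemma jump_series_bounds:
  assumes "0 \<le> t0" "t0 \<le> t" "t \<le> T"
  shows "summable (jump_term \<theta> w T z t0 t)" "0 \<le> jump_series \<theta> w T z t0 t"
    "jump_series \<theta> w T z t0 t \<le> 1" "jump_series \<theta> w T z t0 t \<le> supnorm T w * t0"
    "\<And>k. jump_integral t0 t k < \<top>"
proof -
  have B: "0 \<le> 1 - exp (- Omega_i \<theta> w z t0)"
    using one_minus_exp_Omega_i_bounds assms by auto
  note E = ennreal_series_bounded[OF B sum_jump_integral_le[OF assms]]
  show "summable (jump_term \<theta> w T z t0 t)"
    using E(2) unfolding jump_term_def[abs_def] .
  show "0 \<le> jump_series \<theta> w T z t0 t"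
    unfolding jump_series_def jump_term_def by (intro suminf_nonneg) (use E(2) in auto)
  show "\<And>k. jump_integral t0 t k < \<top>" by (rule E(1))
  have "jump_series \<theta> w T z t0 t \<le> 1 - exp (- Omega_i \<theta> w z t0)"
    unfolding jump_series_def jump_term_def using E(3) .
  then show "jump_series \<theta> w T z t0 t \<le> 1" "jump_series \<theta> w T z t0 t \<le> supnorm T w * t0"
    using one_minus_exp_Omega_i_bounds[OF assms(1) order_trans[OF assms(2,3)]]
      exp_gt_zero[of "- Omega_i \<theta> w z t0"] by linarith+
qed

lemma jump_term_mono_lipschitz_time:
  assumes "0 \<le> t0" "t0 \<le> t" "t \<le> t'" "t' \<le> T"
  shows "jump_term \<theta> w T z t0 t' k \<le> jump_term \<theta> w T z t0 t k"
    "jump_term \<theta> w T z t0 t k \<le> jump_term \<theta> w T z t0 t' k + supnorm T w * (t' - t) * jump_term \<theta> w T z t0 t k"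
proof -
  define \<epsilon> where "\<epsilon> = supnorm T w * (t' - t)"
  have \<epsilon>0: "0 \<le> \<epsilon>" unfolding \<epsilon>_def using supnorm_w_nonneg[OF w] assms by simp
  note bt = jump_series_bounds(5)[OF assms(1,2) order_trans[OF assms(3,4)]]
  note bt' = jump_series_bounds(5)[OF assms(1) order_trans[OF assms(2,3)] assms(4)]
  note ptw = survival_b_mono_lipschitz[OF w _ _ assms(3,4), folded \<epsilon>_def]
  have [measurable]: "(\<lambda>s. ennreal (survival_b \<theta> w t s)) \<in> borel_measurable borel"
    "(\<lambda>s. ennreal (survival_b \<theta> w t' s)) \<in> borel_measurable borel"
    using survival_b_measurable assms by auto
  have le1: "jump_integral t0 t' k \<le> jump_integral t0 t k"
    by (intro simplex_integral_mono ennreal_leI ptw(1)) (use assms in auto)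
  have le2: "jump_integral t0 t k \<le> jump_integral t0 t' k + ennreal \<epsilon> * jump_integral t0 t k"
  proof -
    have "jump_integral t0 t k \<le> simplex_integral (first_jump_density \<theta> w T z) (jump_density \<theta> w T) t0 (Suc k)
        (\<lambda>s. ennreal (survival_b \<theta> w t' s) + ennreal \<epsilon> * ennreal (survival_b \<theta> w t s))"
    proof (intro simplex_integral_mono)
      fix s assume "0 \<le> s" "s \<le> t0"
      then have "survival_b \<theta> w t s \<le> survival_b \<theta> w t' s + \<epsilon> * survival_b \<theta> w t s"
        using ptw(2) assms by auto
      then show "ennreal (survival_b \<theta> w t s)
          \<le> ennreal (survival_b \<theta> w t' s) + ennreal \<epsilon> * ennreal (survival_b \<theta> w t s)"
        using \<epsilon>0 by (simp add: survival_b_def ennreal_mult[symmetric] ennreal_plus[symmetric] del: ennreal_plus)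
    qed simp
    also have "\<dots> = jump_integral t0 t' k + ennreal \<epsilon> * jump_integral t0 t k"
      by (simp add: simplex_integral_add simplex_integral_cmult)
    finally show ?thesis .
  qed
  show "jump_term \<theta> w T z t0 t' k \<le> jump_term \<theta> w T z t0 t k"
    unfolding jump_term_def by (rule enn2real_mono[OF le1 bt])
  have "jump_term \<theta> w T z t0 t k \<le> jump_term \<theta> w T z t0 t' k + \<epsilon> * jump_term \<theta> w T z t0 t k"
  proof -
    have "jump_term \<theta> w T z t0 t k \<le> enn2real (jump_integral t0 t' k + ennreal \<epsilon> * jump_integral t0 t k)"
      unfolding jump_term_def
      by (rule enn2real_mono[OF le2]) (use bt bt' \<epsilon>0 in \<open>auto simp: ennreal_mult_less_top\<close>)
    also have "\<dots> = jump_term \<theta> w T z t0 t' k + \<epsilon> * jump_term \<theta> w T z t0 t k"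
      unfolding jump_term_def using bt bt' \<epsilon>0
      by (subst enn2real_plus) (auto simp: enn2real_mult ennreal_mult_less_top)
    finally show ?thesis .
  qed
  then show "jump_term \<theta> w T z t0 t k \<le> jump_term \<theta> w T z t0 t' k + supnorm T w * (t' - t) * jump_term \<theta> w T z t0 t k"
    unfolding \<epsilon>_def .
qed

lemma jump_series_mono_lipschitz_time:
  assumes "0 \<le> t0" "t0 \<le> t" "t \<le> t'" "t' \<le> T"
  shows "jump_series \<theta> w T z t0 t' \<le> jump_series \<theta> w T z t0 t"
    "jump_series \<theta> w T z t0 t \<le> jump_series \<theta> w T z t0 t' + supnorm T w * (t' - t)"
proof -
  define \<epsilon> where "\<epsilon> = supnorm T w * (t' - t)"
  have \<epsilon>0: "0 \<le> \<epsilon>" unfolding \<epsilon>_def using supnorm_w_nonneg[OF w] assms by simp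
  note bt = jump_series_bounds[OF assms(1,2) order_trans[OF assms(3,4)]]
  note bt' = jump_series_bounds[OF assms(1) order_trans[OF assms(2,3)] assms(4)]
  note L = jump_term_mono_lipschitz_time[OF assms, folded \<epsilon>_def]
  show "jump_series \<theta> w T z t0 t' \<le> jump_series \<theta> w T z t0 t"
    unfolding jump_series_def by (rule suminf_le[OF L(1) bt'(1) bt(1)])
  have "jump_series \<theta> w T z t0 t \<le> (\<Sum>k. jump_term \<theta> w T z t0 t' k + \<epsilon> * jump_term \<theta> w T z t0 t k)"
    unfolding jump_series_def by (rule suminf_le[OF L(2) bt(1)]) (intro summable_add summable_mult bt'(1) bt(1))
  also have "\<dots> = jump_series \<theta> w T z t0 t' + \<epsilon> * jump_series \<theta> w T z t0 t"
    unfolding jump_series_def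
    by (subst suminf_add[symmetric]) (auto intro: summable_mult bt'(1) bt(1) simp: suminf_mult[OF bt(1)])
  also have "\<dots> \<le> jump_series \<theta> w T z t0 t' + \<epsilon>"
    using bt(3) \<epsilon>0 by (simp add: mult_left_le)
  finally show "jump_series \<theta> w T z t0 t \<le> jump_series \<theta> w T z t0 t' + supnorm T w * (t' - t)"
    unfolding \<epsilon>_def .
qed

lemma kernel_step_le:
  assumes s: "0 \<le> s" "s \<le> t0" and "t0 \<le> t0'" "t0' \<le> T"
    and \<epsilon>: "supnorm T w * (t0' - t0) \<le> \<epsilon>"
  shows "kernel (jump_density \<theta> w T) t0' (\<lambda>y. if y \<le> t0 then ennreal \<epsilon> else 1) s \<le> ennreal \<epsilon>"
proof -
  define E1 E2 where "E1 = exp (- Omega_b \<theta> w s t0)" and "E2 = exp (- Omega_b \<theta> w s t0')"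
  have o: "0 \<le> Omega_b \<theta> w s t0" "Omega_b \<theta> w s t0 \<le> Omega_b \<theta> w s t0'"
      "Omega_b \<theta> w s t0' - Omega_b \<theta> w s t0 \<le> \<epsilon>"
    using Omega_b_bounds[OF w s assms(3,4)] \<epsilon> by auto
  have \<epsilon>0: "0 \<le> \<epsilon>" using o by linarith
  have E12: "E1 - E2 \<le> E1 * \<epsilon>"
    using exp_minus_diff_le[of "Omega_b \<theta> w s t0' - Omega_b \<theta> w s t0" \<epsilon> "Omega_b \<theta> w s t0"] o
    unfolding E1_def E2_def by simp
  have E: "E1 \<le> 1" "0 \<le> E1" "E2 \<le> E1" using o unfolding E1_def E2_def by auto
  note jump_density_measurable[OF w, measurable]
  have "kernel (jump_density \<theta> w T) t0' (\<lambda>y. if y \<le> t0 then ennreal \<epsilon> else 1) s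
      \<le> (\<integral>\<^sup>+y. ennreal \<epsilon> * (indicator {s..t0} y * ennreal (jump_density \<theta> w T s y))
          + indicator {t0..t0'} y * ennreal (jump_density \<theta> w T s y) \<partial>lborel)"
    unfolding kernel_def
    by (intro nn_integral_mono) (use s in \<open>auto simp: indicator_def mult_ac\<close>)
  also have "\<dots> = ennreal \<epsilon> * (\<integral>\<^sup>+y. indicator {s..t0} y * ennreal (jump_density \<theta> w T s y) \<partial>lborel)
      + (\<integral>\<^sup>+y. indicator {t0..t0'} y * ennreal (jump_density \<theta> w T s y) \<partial>lborel)"
    by (subst nn_integral_add) (auto simp: nn_integral_cmult)
  also have "\<dots> = ennreal (\<epsilon> * (1 - E1) + (E1 - E2))"
    using nn_integral_jump_density[OF w s(1) order_refl s(2)] nn_integral_jump_density[OF w s assms(3)]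
      assms E \<epsilon>0
    by (simp add: E1_def E2_def ennreal_mult ennreal_plus)
  also have "\<dots> \<le> ennreal \<epsilon>"
    using E12 E \<epsilon>0 by (intro ennreal_leI) (simp add: algebra_simps)
  finally show ?thesis .
qed

text \<open>Raising \<open>t\<^sub>0\<close> to \<open>t\<^sub>0'\<close> adds the chains whose last jump lies in \<open>(t\<^sub>0, t\<^sub>0']\<close>. They are
  controlled by the supersolution which is \<open>\<epsilon>\<close> up to \<open>t\<^sub>0\<close> (a jump into \<open>(t\<^sub>0, t\<^sub>0']\<close> has
  probability at most \<open>\<epsilon>\<close>) and \<open>1\<close> after \<open>t\<^sub>0\<close>.\<close>
lemma step_supersolution:
  assumes "0 \<le> t0" "t0 \<le> t0'" "t0' \<le> t" "t \<le> T" "0 \<le> s" "s \<le> t0'"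
    and \<epsilon>: "supnorm T w * (t0' - t0) \<le> \<epsilon>"
  shows "indicator {t0<..} s * ennreal (survival_b \<theta> w t s)
      + kernel (jump_density \<theta> w T) t0' (\<lambda>y. if y \<le> t0 then ennreal \<epsilon> else 1) s
    \<le> (if s \<le> t0 then ennreal \<epsilon> else 1)"
proof (cases "s \<le> t0")
  case True
  then show ?thesis
    using kernel_step_le[OF assms(5) True assms(2) order_trans[OF assms(3,4)] \<epsilon>] by simp
next
  case False
  have o: "Omega_b \<theta> w s t0' \<le> Omega_b \<theta> w s t" "0 \<le> Omega_b \<theta> w s t0'"
    using Omega_b_bounds[OF w assms(5,6,3)] assms by auto
  have "kernel (jump_density \<theta> w T) t0' (\<lambda>y. if y \<le> t0 then ennreal \<epsilon> else 1) s
      \<le> kernel (jump_density \<theta> w T) t0' (\<lambda>_. 1) s"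
    using False by (intro kernel_mono) auto
  also have "\<dots> = ennreal (1 - exp (- Omega_b \<theta> w s t0'))"
    using assms by (intro kernel_const_one) auto
  finally have "indicator {t0<..} s * ennreal (survival_b \<theta> w t s)
        + kernel (jump_density \<theta> w T) t0' (\<lambda>y. if y \<le> t0 then ennreal \<epsilon> else 1) s
      \<le> ennreal (exp (- Omega_b \<theta> w s t) + (1 - exp (- Omega_b \<theta> w s t0')))"
    using False assms o by (auto simp: survival_b_eq[OF w] ennreal_plus intro!: add_mono)
  also have "\<dots> \<le> ennreal 1" using o by (intro ennreal_leI) simp
  finally show ?thesis using False by simp
qed

lemma simplex_integral_step_le:
  assumes "0 \<le> t0" "t0 \<le> t0'" "t0' \<le> T"
    and \<epsilon>: "supnorm T w * (t0' - t0) \<le> \<epsilon>"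
  shows "simplex_integral (first_jump_density \<theta> w T z) (jump_density \<theta> w T) t0' 1
      (\<lambda>v. if v \<le> t0 then ennreal \<epsilon> else 1) \<le> ennreal (2 * \<epsilon>)"
proof -
  define e0 e1 where "e0 = exp (- Omega_i \<theta> w z t0)" and "e1 = exp (- Omega_i \<theta> w z t0')"
  have o: "0 \<le> Omega_i \<theta> w z t0" "Omega_i \<theta> w z t0 \<le> Omega_i \<theta> w z t0'"
      "Omega_i \<theta> w z t0' - Omega_i \<theta> w z t0 \<le> \<epsilon>"
    using Omega_i_bounds[OF w z assms(1-3)] \<epsilon> by auto
  have \<epsilon>0: "0 \<le> \<epsilon>" using o by linarith
  have e01: "e0 - e1 \<le> e0 * \<epsilon>"
    using exp_minus_diff_le[of "Omega_i \<theta> w z t0' - Omega_i \<theta> w z t0" \<epsilon> "Omega_i \<theta> w z t0"] o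
    unfolding e0_def e1_def by simp
  have e: "e0 \<le> 1" "0 \<le> e0" "e1 \<le> e0" using o unfolding e0_def e1_def by auto
  have "simplex_integral (first_jump_density \<theta> w T z) (jump_density \<theta> w T) t0' 1
      (\<lambda>v. if v \<le> t0 then ennreal \<epsilon> else 1)
    = (\<integral>\<^sup>+v. indicator {0..t0'} v * ennreal (first_jump_density \<theta> w T z v)
        * (if v \<le> t0 then ennreal \<epsilon> else 1) \<partial>lborel)"
    by (intro simplex_integral_one) measurable
  also have "\<dots> \<le> (\<integral>\<^sup>+v. ennreal \<epsilon> * (indicator {0..t0} v * ennreal (first_jump_density \<theta> w T z v))
      + indicator {t0..t0'} v * ennreal (first_jump_density \<theta> w T z v) \<partial>lborel)"
    by (intro nn_integral_mono) (use assms in \<open>auto simp: indicator_def mult_ac\<close>)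
  also have "\<dots> = ennreal \<epsilon> * (\<integral>\<^sup>+v. indicator {0..t0} v * ennreal (first_jump_density \<theta> w T z v) \<partial>lborel)
      + (\<integral>\<^sup>+v. indicator {t0..t0'} v * ennreal (first_jump_density \<theta> w T z v) \<partial>lborel)"
    by (subst nn_integral_add) (auto simp: nn_integral_cmult)
  also have "\<dots> = ennreal (\<epsilon> * (1 - e0) + (e0 - e1))"
    using nn_integral_first_jump_density[OF w z order_refl assms(1)]
      nn_integral_first_jump_density[OF w z assms(1,2)] assms e \<epsilon>0
    by (simp add: e0_def e1_def ennreal_mult ennreal_plus)
  also have "\<dots> \<le> ennreal (2 * \<epsilon>)"
    using e01 e \<epsilon>0 by (intro ennreal_leI) (simp add: algebra_simps)
  finally show ?thesis .
qed

lemma jump_series_mono_lipschitz_start: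
  assumes "0 \<le> t0" "t0 \<le> t0'" "t0' \<le> t" "t \<le> T"
  shows "jump_series \<theta> w T z t0 t \<le> jump_series \<theta> w T z t0' t"
    "jump_series \<theta> w T z t0' t \<le> jump_series \<theta> w T z t0 t + 2 * supnorm T w * (t0' - t0)"
proof -
  define \<epsilon> where "\<epsilon> = supnorm T w * (t0' - t0)"
  have \<epsilon>0: "0 \<le> \<epsilon>" unfolding \<epsilon>_def using supnorm_w_nonneg[OF w] assms by simp
  let ?g = "\<lambda>s. indicator {t0<..} s * ennreal (survival_b \<theta> w t s)"
  let ?extra = "\<lambda>k. simplex_integral (first_jump_density \<theta> w T z) (jump_density \<theta> w T) t0' (Suc k) ?g"
  have [measurable]: "(\<lambda>s. ennreal (survival_b \<theta> w t s)) \<in> borel_measurable borel"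
    using survival_b_measurable assms by auto
  note bt = jump_series_bounds[OF assms(1) order_trans[OF assms(2,3)] assms(4)]
  note bt' = jump_series_bounds[OF order_trans[OF assms(1,2)] assms(3,4)]
  have split: "jump_integral t0' t k = jump_integral t0 t k + ?extra k" for k
    by (rule simplex_integral_split[OF simplex_kernel_densities[OF w] _ assms(2)]) auto
  have extra_fin: "?extra k < \<top>" for k
    using bt'(5)[of k] unfolding split[of k] by (simp add: add_increasing)
  have extra_le: "(\<Sum>k<N. ?extra k) \<le> ennreal (2 * \<epsilon>)" for N
  proof -
    have "(\<Sum>k<N. ?extra k) \<le> simplex_integral (first_jump_density \<theta> w T z) (jump_density \<theta> w T) t0' 1
        (\<lambda>v. if v \<le> t0 then ennreal \<epsilon> else 1)"
      using step_supersolution[OF assms, where \<epsilon>=\<epsilon>] unfolding \<epsilon>_def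
      by (intro sum_simplex_integral_le_supersolution) auto
    also have "\<dots> \<le> ennreal (2 * \<epsilon>)"
      using assms by (intro simplex_integral_step_le) (auto simp: \<epsilon>_def)
    finally show ?thesis .
  qed
  have "0 \<le> 2 * \<epsilon>" using \<epsilon>0 by simp
  note extra = ennreal_series_bounded[OF this extra_le]
  have "jump_series \<theta> w T z t0' t = (\<Sum>k. enn2real (jump_integral t0 t k) + enn2real (?extra k))"
    unfolding jump_series_def jump_term_def split using bt(5) extra_fin by (simp add: enn2real_plus)
  also have "\<dots> = jump_series \<theta> w T z t0 t + (\<Sum>k. enn2real (?extra k))"
    unfolding jump_series_def jump_term_def
    by (rule suminf_add[symmetric, OF bt(1)[unfolded jump_term_def] extra(2)])
  finally show "jump_series \<theta> w T z t0 t \<le> jump_series \<theta> w T z t0' t"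
    "jump_series \<theta> w T z t0' t \<le> jump_series \<theta> w T z t0 t + 2 * supnorm T w * (t0' - t0)"
    using extra(2,3) \<epsilon>0 suminf_nonneg[OF extra(2)] unfolding \<epsilon>_def by auto
qed

lemma jump_series_lipschitz:
  assumes "0 \<le> s" "s \<le> t" "t \<le> T" "0 \<le> s'" "s' \<le> t'" "t' \<le> T"
  shows "\<bar>jump_series \<theta> w T z s t - jump_series \<theta> w T z s' t'\<bar>
    \<le> supnorm T w * (2 * \<bar>s - s'\<bar> + \<bar>t - t'\<bar>)"
proof -
  define M where "M = max t t'"
  have M: "t \<le> M" "t' \<le> M" "M \<le> T" using assms by (auto simp: M_def)
  have "\<bar>jump_series \<theta> w T z s t - jump_series \<theta> w T z s M\<bar> \<le> supnorm T w * (M - t)"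
    using jump_series_mono_lipschitz_time[OF assms(1,2) M(1,3)] by simp
  moreover have "\<bar>jump_series \<theta> w T z s' t' - jump_series \<theta> w T z s' M\<bar> \<le> supnorm T w * (M - t')"
    using jump_series_mono_lipschitz_time[OF assms(4,5) M(2,3)] by simp
  moreover have "\<bar>jump_series \<theta> w T z s M - jump_series \<theta> w T z s' M\<bar> \<le> 2 * supnorm T w * \<bar>s - s'\<bar>"
  proof (cases "s \<le> s'")
    case True
    then show ?thesis
      using jump_series_mono_lipschitz_start[OF assms(1) True _ M(3), of] assms M by (simp add: abs_if)
  next
    case False
    then show ?thesis
      using jump_series_mono_lipschitz_start[OF assms(4) _ _ M(3), of s] assms M by (simp add: abs_if)
  qed
  moreover have "supnorm T w * (M - t) + supnorm T w * (M - t') = supnorm T w * \<bar>t - t'\<bar>"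
    unfolding M_def by (simp add: max_def abs_if algebra_simps)
  ultimately show ?thesis by (simp add: algebra_simps abs_le_iff) linarith
qed

end

end

section \<open>Measurability in w\<close>

lemma measurable_compose_triple:
  assumes "f \<in> N \<rightarrow>\<^sub>M M" "g \<in> borel_measurable N" "h \<in> borel_measurable N"
    and "(\<lambda>p. F (fst p) (fst (snd p)) (snd (snd p))) \<in> borel_measurable (M \<Otimes>\<^sub>M (lborel \<Otimes>\<^sub>M lborel))"
  shows "(\<lambda>x. F (f x) (g x) (h x)) \<in> borel_measurable N"
proof -
  have "g \<in> N \<rightarrow>\<^sub>M lborel" "h \<in> N \<rightarrow>\<^sub>M lborel"
    using assms(2,3) by (simp_all add: measurable_cong_sets[OF refl sets_lborel])
  from measurable_compose[OF measurable_Pair[OF assms(1) measurable_Pair[OF this]] assms(4)]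
  show ?thesis by simp
qed

locale theta_measure_setting = theta_setting +
  fixes lam :: "(real \<times> real \<Rightarrow> real) measure"
  assumes lam_sets: "sets lam = sup_borel_sets T W" and lam_space: "space lam = W"
begin

abbreviation "M2 \<equiv> lam \<Otimes>\<^sub>M (lborel :: real measure)"

lemma space_M2: "space M2 = W \<times> UNIV"
  by (simp add: space_pair_measure lam_space)

lemma W_times_sets[measurable]: "A \<in> sets borel \<Longrightarrow> W \<times> A \<in> sets M2"
  by (metis lam_space pair_measureI sets.top sets_lborel)

context
  fixes w assumes w: "w \<in> W"
begin

lemma tendsto_Omega_i:
  assumes "0 \<le> z" "z \<le> 1" "0 \<le> t" "t \<le> T"
  shows "((\<lambda>v. Omega_i \<theta> v z t) \<longlongrightarrow> Omega_i \<theta> w z t) (sup_filter T W w)"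
  unfolding Omega_i_def
proof (rule tendsto_sup_filter_integral[OF W_adm w, where g="\<lambda>u. (\<theta> (z, 0) u, u)"])
  show "u \<in> {0..t} \<Longrightarrow> (\<theta> (z, 0) u, u) \<in> rect T" for u
    using assms by (intro theta_initial_in_rect) auto
  show "continuous_on {0..t} (\<lambda>u. (\<theta> (z, 0) u, u))"
    using assms by (intro continuous_intros continuous_on_subset[OF continuous_on_theta_initial_line]) auto
qed

lemma tendsto_Omega_b:
  assumes "0 \<le> s" "s \<le> t" "t \<le> T"
  shows "((\<lambda>v. Omega_b \<theta> v s t) \<longlongrightarrow> Omega_b \<theta> w s t) (sup_filter T W w)"
  unfolding Omega_b_def
proof (rule tendsto_sup_filter_integral[OF W_adm w, where g="\<lambda>u. (\<theta> (0, s) u, u)"])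
  show "u \<in> {s..t} \<Longrightarrow> (\<theta> (0, s) u, u) \<in> rect T" for u
    using assms by (intro theta_boundary_in_rect) auto
  show "continuous_on {s..t} (\<lambda>u. (\<theta> (0, s) u, u))"
    using assms by (intro continuous_intros continuous_on_subset[OF continuous_on_theta_boundary_line]) auto
qed

lemma tendsto_first_jump_density:
  "((\<lambda>v. first_jump_density \<theta> v T z y) \<longlongrightarrow> first_jump_density \<theta> w T z y) (sup_filter T W w)"
  unfolding first_jump_density_def rate_i_def using T_pos
  by (intro tendsto_intros tendsto_sup_filter_eval[OF W_adm w] theta_initial_in_rect tendsto_Omega_i)
    (auto simp: clip_def)

lemma tendsto_jump_density:
  "((\<lambda>v. jump_density \<theta> v T s y) \<longlongrightarrow> jump_density \<theta> w T s y) (sup_filter T W w)"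
  unfolding jump_density_def rate_b_def using T_pos
  by (intro tendsto_intros tendsto_sup_filter_eval[OF W_adm w] theta_boundary_in_rect tendsto_Omega_b)
    (auto simp: clip_def)

lemma tendsto_survival_b:
  "0 \<le> t \<Longrightarrow> t \<le> T \<Longrightarrow> ((\<lambda>v. survival_b \<theta> v t s) \<longlongrightarrow> survival_b \<theta> w t s) (sup_filter T W w)"
  unfolding survival_b_def by (intro tendsto_intros tendsto_Omega_b) (auto simp: clip_def)

lemma tendsto_survival_i:
  "0 \<le> t \<Longrightarrow> t \<le> T \<Longrightarrow> ((\<lambda>v. survival_i \<theta> v t z) \<longlongrightarrow> survival_i \<theta> w t z) (sup_filter T W w)"
  unfolding survival_i_def by (intro tendsto_intros tendsto_Omega_i) (auto simp: clip_def)

end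

lemma measurable_supnorm: "(\<lambda>w. supnorm T w) \<in> borel_measurable lam"
proof (rule borel_measurable_if_tendsto_sup_filter[OF lam_sets lam_space])
  fix w assume w: "w \<in> W"
  show "((\<lambda>v. supnorm T v) \<longlongrightarrow> supnorm T w) (sup_filter T W w)"
  proof (rule tendstoI)
    fix e :: real assume "e > 0"
    then show "eventually (\<lambda>v. dist (supnorm T v) (supnorm T w) < e) (sup_filter T W w)"
      unfolding eventually_sup_filter dist_real_def
      using abs_supnorm_diff_le_supdist[OF W_adm _ w] T_pos by (force intro: le_less_trans)
  qed
qed

lemma measurable_first_jump_density:
  "(\<lambda>p. first_jump_density \<theta> (fst p) T (fst (snd p)) (snd (snd p)))
    \<in> borel_measurable (lam \<Otimes>\<^sub>M (lborel \<Otimes>\<^sub>M lborel))"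
  using borel_measurable_caratheodory[where f="\<lambda>w x. first_jump_density \<theta> w T (fst x) (snd x)" and M=lam]
    borel_measurable_if_tendsto_sup_filter[OF lam_sets lam_space tendsto_first_jump_density]
    continuous_first_jump_density
  by (simp add: lam_space split_beta')

lemma measurable_jump_density:
  "(\<lambda>p. jump_density \<theta> (fst p) T (fst (snd p)) (snd (snd p)))
    \<in> borel_measurable (lam \<Otimes>\<^sub>M (lborel \<Otimes>\<^sub>M lborel))"
  using borel_measurable_caratheodory[where f="\<lambda>w x. jump_density \<theta> w T (fst x) (snd x)" and M=lam]
    borel_measurable_if_tendsto_sup_filter[OF lam_sets lam_space tendsto_jump_density]
    continuous_jump_density
  by (simp add: lam_space split_beta')

lemma measurable_survival_b:
  assumes "0 \<le> t" "t \<le> T"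
  shows "(\<lambda>p. survival_b \<theta> (fst p) t (fst (snd p :: real \<times> real)))
    \<in> borel_measurable (lam \<Otimes>\<^sub>M (lborel \<Otimes>\<^sub>M lborel))"
proof -
  have "continuous_on UNIV (\<lambda>x::real \<times> real. survival_b \<theta> w t (fst x))" if "w \<in> W" for w
    by (intro continuous_on_compose2[OF continuous_survival_b[OF that assms]] continuous_intros) auto
  then show ?thesis
    using borel_measurable_caratheodory[where f="\<lambda>w x. survival_b \<theta> w t (fst x)" and M=lam]
      borel_measurable_if_tendsto_sup_filter[OF lam_sets lam_space tendsto_survival_b[OF _ assms]]
    by (simp add: lam_space)
qed

lemma measurable_survival_i:
  assumes "0 \<le> t" "t \<le> T"
  shows "(\<lambda>p. survival_i \<theta> (fst p) t (snd p)) \<in> borel_measurable M2"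
proof -
  have "continuous_on UNIV (\<lambda>x::real \<times> real. survival_i \<theta> w t (fst x))" if "w \<in> W" for w
    by (intro continuous_on_compose2[OF continuous_survival_i[OF that assms]] continuous_intros) auto
  then have "(\<lambda>p. survival_i \<theta> (fst p) t (fst (snd p :: real \<times> real)))
      \<in> borel_measurable (lam \<Otimes>\<^sub>M (lborel \<Otimes>\<^sub>M lborel))"
    using borel_measurable_caratheodory[where f="\<lambda>w x. survival_i \<theta> w t (fst x)" and M=lam]
      borel_measurable_if_tendsto_sup_filter[OF lam_sets lam_space tendsto_survival_i[OF _ assms]]
    by (simp add: lam_space)
  from measurable_compose_triple[where F="\<lambda>w x y. survival_i \<theta> w t x", OF measurable_fst measurable_snd
      borel_measurable_const this]
  show ?thesis by simp
qed

lemma measurable_jump_integral: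
  assumes "0 \<le> t" "t \<le> T"
  shows "(\<lambda>p. simplex_integral (first_jump_density \<theta> (fst p) T (snd p)) (jump_density \<theta> (fst p) T)
      t0 (Suc k) (\<lambda>s. ennreal (survival_b \<theta> (fst p) t s))) \<in> borel_measurable M2"
proof -
  interpret P: finite_product_sigma_finite "\<lambda>_::nat. lborel :: real measure" "{..<Suc k}"
    by standard simp
  let ?N = "M2 \<Otimes>\<^sub>M PiM {..<Suc k} (\<lambda>_::nat. lborel :: real measure)"
  have u: "(\<lambda>x. snd x i) \<in> borel_measurable ?N" if "i < Suc k" for i
    by (rule measurable_compose[OF measurable_snd measurable_component_real[OF that]])
  have w: "(\<lambda>x. fst (fst x)) \<in> ?N \<rightarrow>\<^sub>M lam" by measurable
  have z: "(\<lambda>x. snd (fst x)) \<in> borel_measurable ?N"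
    using measurable_compose[OF measurable_fst measurable_snd[of lam lborel]]
    by (simp add: measurable_cong_sets[OF refl sets_lborel])
  have "(\<lambda>x. first_jump_density \<theta> (fst (fst x)) T (snd (fst x)) (snd x 0)) \<in> borel_measurable ?N"
    by (rule measurable_compose_triple[OF w z u measurable_first_jump_density]) simp
  moreover have "(\<lambda>x. jump_density \<theta> (fst (fst x)) T (snd x (i - 1)) (snd x i)) \<in> borel_measurable ?N"
    if "i \<in> {1..<Suc k}" for i
    by (rule measurable_compose_triple[OF w u u measurable_jump_density]) (use that in auto)
  moreover have "(\<lambda>x. survival_b \<theta> (fst (fst x)) t (snd x k)) \<in> borel_measurable ?N"
    by (rule measurable_compose_triple[where F="\<lambda>w a b. survival_b \<theta> w t a",
          OF w u borel_measurable_const measurable_survival_b[OF assms]]) simp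
  moreover have "(\<lambda>x. indicator (ord_simplex (Suc k) t0) (snd x) :: ennreal) \<in> borel_measurable ?N"
    by (rule measurable_compose[OF measurable_snd borel_measurable_indicator[OF ord_simplex_sets]])
  ultimately have "(\<lambda>x. indicator (ord_simplex (Suc k) t0) (snd x)
      * ennreal (first_jump_density \<theta> (fst (fst x)) T (snd (fst x)) (snd x 0)
        * (\<Prod>i\<in>{1..<Suc k}. jump_density \<theta> (fst (fst x)) T (snd x (i - 1)) (snd x i)))
      * ennreal (survival_b \<theta> (fst (fst x)) t (snd x k))) \<in> borel_measurable ?N"
    by measurable
  then have "(\<lambda>(p, u). indicator (ord_simplex (Suc k) t0) u
      * ennreal (chain_weight (first_jump_density \<theta> (fst p) T (snd p)) (jump_density \<theta> (fst p) T) (Suc k) u)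
      * ennreal (survival_b \<theta> (fst p) t (u (Suc k - 1)))) \<in> borel_measurable ?N"
    by (simp add: chain_weight_def split_beta')
  from P.borel_measurable_nn_integral[OF this] show ?thesis unfolding simplex_integral_def by simp
qed

lemma measurable_jump_series:
  assumes "0 \<le> t" "t \<le> T"
  shows "(\<lambda>p. jump_series \<theta> (fst p) T (snd p) t0 t) \<in> borel_measurable M2"
  unfolding jump_series_def jump_term_def using measurable_jump_integral[OF assms] by measurable

end

section \<open>Integration against \<open>\<sigma>(w,z) \<lambda>(dw) dz\<close>\<close>

lemma set_integral_eq_integral:
  assumes "\<And>p. p \<in> space M \<Longrightarrow> indicator A p *\<^sub>R g p = f p"
  shows "(LINT p:A|M. g p) = integral\<^sup>L M f"
  unfolding set_lebesgue_integral_def by (rule Bochner_Integration.integral_cong) (auto simp: assms)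

definition sigma_clip :: "((real \<times> real \<Rightarrow> real) \<Rightarrow> real \<Rightarrow> real) \<Rightarrow> (real \<times> real \<Rightarrow> real) \<times> real \<Rightarrow> real" where
  "sigma_clip \<sigma> p = \<sigma> (fst p) (clip 0 1 (snd p))"

locale G_setting = theta_measure_setting +
  fixes \<sigma> :: "(real \<times> real \<Rightarrow> real) \<Rightarrow> real \<Rightarrow> real"
  assumes lam_prob: "prob_space lam"
    and M_W_finite: "(\<integral>\<^sup>+ w. ennreal (supnorm T w) \<partial>lam) < \<infinity>"
    and \<sigma>_nonneg: "\<forall>w\<in>W. \<forall>y\<in>{0..1}. 0 \<le> \<sigma> w y"
    and \<sigma>_meas: "(\<lambda>(w, y). \<sigma> w y) \<in> borel_measurable (lam \<Otimes>\<^sub>M restrict_space lborel {0..1})"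
    and \<sigma>_int_w: "\<forall>y\<in>{0..1}. (\<integral>\<^sup>+ w. ennreal (\<sigma> w y) \<partial>lam) = 1"
    and \<sigma>_int_z: "\<forall>w\<in>W. (\<integral>\<^sup>+ z \<in> {0..1}. ennreal (\<sigma> w z) \<partial>lborel) = 1"
begin

definition M_W :: real where "M_W = enn2real (\<integral>\<^sup>+ w. ennreal (supnorm T w) \<partial>lam)"

lemma nn_integral_supnorm: "(\<integral>\<^sup>+ w. ennreal (supnorm T w) \<partial>lam) = ennreal M_W"
  unfolding M_W_def using M_W_finite by (auto simp: less_top)

lemma M_W_nonneg: "0 \<le> M_W"
  unfolding M_W_def by simp

abbreviation "sg \<equiv> sigma_clip \<sigma>"

lemma measurable_sg[measurable]: "sg \<in> borel_measurable M2"
proof -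
  have "(\<lambda>p::_ \<times> real. (fst p, clip 0 1 (snd p))) \<in> M2 \<rightarrow>\<^sub>M (lam \<Otimes>\<^sub>M restrict_space lborel {0..1})"
  proof (intro measurable_Pair measurable_restrict_space2)
    show "(\<lambda>p::_ \<times> real. clip 0 1 (snd p)) \<in> space M2 \<rightarrow> {0..1}" by (auto simp: clip_def)
    show "(\<lambda>p::_ \<times> real. clip 0 1 (snd p)) \<in> M2 \<rightarrow>\<^sub>M lborel"
      unfolding clip_def by measurable
  qed simp
  from measurable_compose[OF this \<sigma>_meas] show ?thesis unfolding sigma_clip_def by simp
qed

lemma sg_nonneg: "p \<in> space M2 \<Longrightarrow> 0 \<le> sg p"
  unfolding sigma_clip_def using \<sigma>_nonneg by (auto simp: space_M2 clip_def)

lemma sg_eq: "0 \<le> snd p \<Longrightarrow> snd p \<le> 1 \<Longrightarrow> sg p = \<sigma> (fst p) (snd p)"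
  unfolding sigma_clip_def by (simp add: clip_eq)

lemma nn_integral_sigma_strip:
  assumes "0 \<le> a" "a \<le> b" "b \<le> 1"
  shows "(\<integral>\<^sup>+ p. indicator (W \<times> {a..<b}) p * ennreal (sg p) \<partial>M2) = ennreal (b - a)"
proof -
  interpret lp: prob_space lam by (rule lam_prob)
  interpret pair_sigma_finite lam "lborel :: real measure"
    by (intro pair_sigma_finite.intro lp.sigma_finite_measure_axioms lborel.sigma_finite_measure_axioms)
  have "(\<integral>\<^sup>+ p. indicator (W \<times> {a..<b}) p * ennreal (sg p) \<partial>M2)
      = (\<integral>\<^sup>+ y. (\<integral>\<^sup>+ x. indicator (W \<times> {a..<b}) (x, y) * ennreal (sg (x, y)) \<partial>lam) \<partial>lborel)"
    by (rule nn_integral_snd[symmetric]) measurable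
  also have "\<dots> = (\<integral>\<^sup>+ y. indicator {a..<b} y \<partial>lborel)"
  proof (rule nn_integral_cong)
    fix y :: real
    show "(\<integral>\<^sup>+ x. indicator (W \<times> {a..<b}) (x, y) * ennreal (sg (x, y)) \<partial>lam) = indicator {a..<b} y"
    proof (cases "y \<in> {a..<b}")
      case True
      have "(\<integral>\<^sup>+ x. indicator (W \<times> {a..<b}) (x, y) * ennreal (sg (x, y)) \<partial>lam) = (\<integral>\<^sup>+ x. ennreal (\<sigma> x y) \<partial>lam)"
        by (rule nn_integral_cong) (use True assms in \<open>auto simp: lam_space indicator_def sg_eq\<close>)
      then show ?thesis using \<sigma>_int_w True assms by simp
    next
      case False
      then have "\<And>x. indicator (W \<times> {a..<b}) (x, y) * ennreal (sg (x, y)) = (0::ennreal)"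
        by (simp add: indicator_def)
      then show ?thesis using False by simp
    qed
  qed
  also have "\<dots> = ennreal (b - a)" using assms by simp
  finally show ?thesis .
qed

lemma nn_integral_sigma_line:
  assumes x: "x \<in> W" and c: "0 \<le> c"
  shows "(\<integral>\<^sup>+ y. indicator (W \<times> {0..<1}) (x, y) * ennreal (sg (x, y) * c) \<partial>lborel) \<le> ennreal c"
proof -
  have "(\<lambda>y. \<sigma> x y) \<in> borel_measurable (restrict_space lborel {0..1})"
    using measurable_Pair2[OF \<sigma>_meas, of x] x lam_space by simp
  then have "(\<lambda>y. indicator {0..1} y *\<^sub>R \<sigma> x y) \<in> borel_measurable lborel"
    by (subst (asm) borel_measurable_restrict_space_iff) auto
  then have m: "(\<lambda>y. ennreal (\<sigma> x y) * indicator {0..1} y) \<in> borel_measurable lborel"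
    by (rule measurable_compose[OF _ measurable_ennreal, THEN measurable_cong[THEN iffD1, rotated]])
      (simp add: indicator_def)
  have "(\<integral>\<^sup>+ y. indicator (W \<times> {0..<1}) (x, y) * ennreal (sg (x, y) * c) \<partial>lborel)
      \<le> (\<integral>\<^sup>+ y. ennreal c * (ennreal (\<sigma> x y) * indicator {0..1} y) \<partial>lborel)"
    using \<sigma>_nonneg x c
    by (intro nn_integral_mono) (auto simp: sg_eq indicator_def ennreal_mult mult.commute)
  also have "\<dots> = ennreal c" using nn_integral_cmult[OF m] \<sigma>_int_z x by simp
  finally show ?thesis .
qed

lemma nn_integral_sigma_supnorm_le:
  "(\<integral>\<^sup>+ p. indicator (W \<times> {0..<1}) p * ennreal (sg p * supnorm T (fst p)) \<partial>M2) \<le> ennreal M_W"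
proof -
  have [measurable]: "(\<lambda>p. supnorm T (fst p)) \<in> borel_measurable M2"
    using measurable_compose[OF measurable_fst measurable_supnorm] .
  have "(\<integral>\<^sup>+ p. indicator (W \<times> {0..<1}) p * ennreal (sg p * supnorm T (fst p)) \<partial>M2)
      = (\<integral>\<^sup>+ x. (\<integral>\<^sup>+ y. indicator (W \<times> {0..<1}) (x, y) * ennreal (sg (x, y) * supnorm T x) \<partial>lborel) \<partial>lam)"
    using lborel.nn_integral_fst[of "\<lambda>p. indicator (W \<times> {0..<1}) p * ennreal (sg p * supnorm T (fst p))" lam]
    by simp
  also have "\<dots> \<le> (\<integral>\<^sup>+ x. ennreal (supnorm T x) \<partial>lam)"
    using nn_integral_sigma_line supnorm_w_nonneg by (intro nn_integral_mono) (simp add: lam_space)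
  finally show ?thesis by (simp add: nn_integral_supnorm)
qed

definition strip :: "real \<Rightarrow> real \<Rightarrow> (real \<times> real \<Rightarrow> real) \<times> real \<Rightarrow> real" where
  "strip a b p = indicator (W \<times> {a..<b}) p * sg p"

lemma measurable_strip[measurable]: "strip a b \<in> borel_measurable M2"
  unfolding strip_def[abs_def] by measurable

lemma integrable_strip:
  assumes "0 \<le> a" "a \<le> b" "b \<le> 1"
  shows "integrable M2 (strip a b)" "integral\<^sup>L M2 (strip a b) = b - a"
proof -
  have nn: "AE p in M2. 0 \<le> strip a b p"
    using sg_nonneg by (auto simp: strip_def indicator_def)
  have eq: "(\<integral>\<^sup>+ p. ennreal (strip a b p) \<partial>M2) = ennreal (b - a)"
    using nn_integral_sigma_strip[OF assms]
    by (subst nn_integral_cong[where v="\<lambda>p. indicator (W \<times> {a..<b}) p * ennreal (sg p)"])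
      (auto simp: strip_def indicator_def)
  show "integrable M2 (strip a b)"
    by (rule integrableI_nonneg[OF measurable_strip nn]) (simp add: eq)
  show "integral\<^sup>L M2 (strip a b) = b - a"
    by (subst integral_eq_nn_integral[OF measurable_strip nn]) (use assms in \<open>simp add: eq\<close>)
qed

lemma integrable_strip_supnorm:
  "integrable M2 (\<lambda>p. strip 0 1 p * supnorm T (fst p))"
  "integral\<^sup>L M2 (\<lambda>p. strip 0 1 p * supnorm T (fst p)) \<le> M_W"
proof -
  have [measurable]: "(\<lambda>p. supnorm T (fst p)) \<in> borel_measurable M2"
    using measurable_compose[OF measurable_fst measurable_supnorm] .
  have m: "(\<lambda>p. strip 0 1 p * supnorm T (fst p)) \<in> borel_measurable M2" by measurable
  have nn: "AE p in M2. 0 \<le> strip 0 1 p * supnorm T (fst p)"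
    using sg_nonneg supnorm_w_nonneg by (auto simp: space_M2 strip_def indicator_def)
  have eq: "(\<integral>\<^sup>+ p. ennreal (strip 0 1 p * supnorm T (fst p)) \<partial>M2)
      = (\<integral>\<^sup>+ p. indicator (W \<times> {0..<1}) p * ennreal (sg p * supnorm T (fst p)) \<partial>M2)"
    by (rule nn_integral_cong) (simp add: strip_def indicator_def)
  show "integrable M2 (\<lambda>p. strip 0 1 p * supnorm T (fst p))"
    by (rule integrableI_nonneg[OF m nn]) (use nn_integral_sigma_supnorm_le eq in \<open>simp add: le_less_trans\<close>)
  show "integral\<^sup>L M2 (\<lambda>p. strip 0 1 p * supnorm T (fst p)) \<le> M_W"
    by (subst integral_eq_nn_integral[OF m nn])
      (rule enn2real_leI[OF M_W_nonneg], simp add: eq nn_integral_sigma_supnorm_le)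
qed

lemma set_integral_jump_integrand:
  assumes w: "w \<in> W" and z: "0 \<le> z" "z \<le> 1" and s: "0 \<le> s" "s \<le> t" "t \<le> T"
  shows "(LINT u : ord_simplex (Suc k) s | PiM {..<Suc k} (\<lambda>_. lborel). jump_integrand \<theta> w z t (Suc k) u)
    = jump_term \<theta> w T z s t k"
proof -
  interpret simplex_kernel "first_jump_density \<theta> w T z" "jump_density \<theta> w T"
    by (rule simplex_kernel_densities[OF w])
  let ?A = "ord_simplex (Suc k) s"
  define h where "h u = indicator ?A u
    * (chain_weight (first_jump_density \<theta> w T z) (jump_density \<theta> w T) (Suc k) u * survival_b \<theta> w t (u k))" for u
  have "(\<lambda>u. survival_b \<theta> w t (u k)) \<in> borel_measurable (PM (Suc k))"
    using measurable_compose[OF measurable_component_real[of k "Suc k"]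
        borel_measurable_continuous_onI[OF continuous_survival_b[OF w]]] s by simp
  then have hm: "h \<in> borel_measurable (PM (Suc k))"
    unfolding h_def using chain_weight_measurable[of "Suc k"] ord_simplex_sets[of "Suc k" s] by measurable
  have hnn: "0 \<le> h u" for u
    unfolding h_def using chain_weight_nonneg by (simp add: survival_b_def)
  have "(LINT u : ?A | PM (Suc k). jump_integrand \<theta> w z t (Suc k) u) = integral\<^sup>L (PM (Suc k)) h"
    by (intro set_integral_eq_integral)
      (auto simp: h_def jump_integrand_eq[OF w z _ s(2,3)] split: split_indicator)
  also have "\<dots> = enn2real (\<integral>\<^sup>+ u. ennreal (h u) \<partial>PM (Suc k))"
    using hm hnn by (intro integral_eq_nn_integral) auto
  also have "(\<integral>\<^sup>+ u. ennreal (h u) \<partial>PM (Suc k))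
      = simplex_integral (first_jump_density \<theta> w T z) (jump_density \<theta> w T) s (Suc k) (\<lambda>s. ennreal (survival_b \<theta> w t s))"
    unfolding simplex_integral_def h_def using chain_weight_nonneg
    by (intro nn_integral_cong) (simp add: indicator_def ennreal_mult survival_b_def)
  finally show ?thesis unfolding jump_term_def .
qed

lemma survival_i_bounds:
  assumes "w \<in> W" "0 \<le> t" "t \<le> T"
  shows "0 \<le> survival_i \<theta> w t z" "survival_i \<theta> w t z \<le> 1"
proof -
  have "0 \<le> Omega_i \<theta> w (clip 0 1 z) t"
    using Omega_i_bounds(1)[OF assms(1), of "clip 0 1 z" t t] assms by (auto simp: clip_def)
  then show "0 \<le> survival_i \<theta> w t z" "survival_i \<theta> w t z \<le> 1" unfolding survival_i_def by auto
qed

lemma survival_i_eq: "0 \<le> z \<Longrightarrow> z \<le> 1 \<Longrightarrow> survival_i \<theta> w t z = exp (- Omega_i \<theta> w z t)"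
  unfolding survival_i_def by (simp add: clip_eq)

lemma survival_i_lipschitz:
  assumes w: "w \<in> W" and z: "0 \<le> z" "z \<le> 1" and t: "0 \<le> t" "t \<le> T" "0 \<le> t'" "t' \<le> T"
  shows "\<bar>survival_i \<theta> w t z - survival_i \<theta> w t' z\<bar> \<le> supnorm T w * \<bar>t - t'\<bar>"
proof -
  have *: "\<bar>exp (- Omega_i \<theta> w z a) - exp (- Omega_i \<theta> w z b)\<bar> \<le> supnorm T w * (b - a)"
    if ab: "0 \<le> a" "a \<le> b" "b \<le> T" for a b
  proof -
    note o = Omega_i_bounds[OF w z ab]
    have "exp (- Omega_i \<theta> w z a) - exp (- (Omega_i \<theta> w z a + (Omega_i \<theta> w z b - Omega_i \<theta> w z a)))
        \<le> exp (- Omega_i \<theta> w z a) * (supnorm T w * (b - a))"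
      using o by (intro exp_minus_diff_le) auto
    also have "\<dots> \<le> supnorm T w * (b - a)"
      using o supnorm_w_nonneg[OF w] ab by (intro mult_left_le_one_le) auto
    finally show ?thesis using o by simp
  qed
  show ?thesis
    using *[of t t'] *[of t' t] t z by (cases "t \<le> t'") (auto simp: survival_i_eq abs_minus_commute)
qed

definition initial_integrand :: "real \<Rightarrow> real \<Rightarrow> (real \<times> real \<Rightarrow> real) \<times> real \<Rightarrow> real" where
  "initial_integrand y t p = strip y 1 p * survival_i \<theta> (fst p) t (snd p)"

definition jump_series_integrand :: "real \<Rightarrow> real \<Rightarrow> (real \<times> real \<Rightarrow> real) \<times> real \<Rightarrow> real" where
  "jump_series_integrand s t p = strip 0 1 p * jump_series \<theta> (fst p) T (snd p) s t"

lemma integrable_initial_integrand: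
  assumes "0 \<le> y" "0 \<le> t" "t \<le> T"
  shows "integrable M2 (initial_integrand y t)"
proof (rule Bochner_Integration.integrable_bound[OF integrable_strip(1)[of 0 1]])
  show "initial_integrand y t \<in> borel_measurable M2"
    unfolding initial_integrand_def[abs_def] using measurable_survival_i[OF assms(2,3)] by measurable
  show "AE p in M2. norm (initial_integrand y t p) \<le> norm (strip 0 1 p)"
    using survival_i_bounds[OF _ assms(2,3)] sg_nonneg assms(1)
    by (intro AE_I2) (auto simp: initial_integrand_def strip_def indicator_def space_M2 abs_mult
        intro!: mult_right_le_one_le)
qed auto

lemma integrable_jump_series_integrand:
  assumes "0 \<le> s" "s \<le> t" "t \<le> T"
  shows "integrable M2 (jump_series_integrand s t)"
proof (rule Bochner_Integration.integrable_bound[OF integrable_strip(1)[of 0 1]])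
  show "jump_series_integrand s t \<in> borel_measurable M2"
    using measurable_jump_series[OF order_trans[OF assms(1,2)] assms(3)]
    unfolding jump_series_integrand_def[abs_def] by measurable
  show "AE p in M2. norm (jump_series_integrand s t p) \<le> norm (strip 0 1 p)"
  proof (rule AE_I2)
    fix p assume p: "p \<in> space M2"
    show "norm (jump_series_integrand s t p) \<le> norm (strip 0 1 p)"
    proof (cases "p \<in> W \<times> {0..<1}")
      case True
      then have "fst p \<in> W" "0 \<le> snd p" "snd p \<le> 1" by auto
      with jump_series_bounds[OF this assms] sg_nonneg[OF p] True show ?thesis
        by (auto simp: jump_series_integrand_def strip_def abs_mult intro!: mult_right_le_one_le)
    qed (simp add: jump_series_integrand_def strip_def)
  qed
qed auto

lemma set_integral_initial_integrand:
  assumes "0 \<le> y" "0 \<le> t"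
  shows "(LINT p : space lam \<times> {y..<1} | M2. exp (- Omega_i \<theta> (fst p) (snd p) t) * \<sigma> (fst p) (snd p))
    = integral\<^sup>L M2 (initial_integrand y t)"
  unfolding lam_space using assms
  by (intro set_integral_eq_integral)
    (auto simp: indicator_def survival_i_eq sg_eq initial_integrand_def strip_def)

lemma set_integral_jump_series_integrand:
  assumes "0 \<le> s" "s \<le> t" "t \<le> T"
  shows "(LINT p : space lam \<times> {0..<1} | M2.
      (\<Sum>k. (LINT u : ord_simplex (Suc k) s | PiM {..<Suc k} (\<lambda>_. lborel). jump_integrand \<theta> (fst p) (snd p) t (Suc k) u))
      * \<sigma> (fst p) (snd p)) = integral\<^sup>L M2 (jump_series_integrand s t)"
  unfolding lam_space
proof (rule set_integral_eq_integral)
  fix p :: "(real \<times> real \<Rightarrow> real) \<times> real"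
  show "indicator (W \<times> {0..<1}) p *\<^sub>R ((\<Sum>k. (LINT u : ord_simplex (Suc k) s | PiM {..<Suc k} (\<lambda>_. lborel).
      jump_integrand \<theta> (fst p) (snd p) t (Suc k) u)) * \<sigma> (fst p) (snd p)) = jump_series_integrand s t p"
  proof (cases "p \<in> W \<times> {0..<1}")
    case True
    then have "fst p \<in> W" "0 \<le> snd p" "snd p \<le> 1" by auto
    with set_integral_jump_integrand[OF this assms] True show ?thesis
      by (simp add: jump_series_integrand_def jump_series_def strip_def sg_eq)
  qed (simp add: jump_series_integrand_def strip_def)
qed

lemma jump_series_integrand_zero:
  assumes "0 \<le> t" "t \<le> T"
  shows "jump_series_integrand 0 t = (\<lambda>_. 0)"
proof
  fix p
  show "jump_series_integrand 0 t p = 0"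
    using jump_series_bounds(2,4)[of "fst p" "snd p" 0 t] assms
    by (cases "p \<in> W \<times> {0..<1}") (auto simp: jump_series_integrand_def strip_def)
qed

lemma G_eq_integrals:
  assumes x: "x \<in> Delta T"
  shows "G lam \<sigma> \<theta> (fst x) (snd x)
    = 1 - integral\<^sup>L M2 (initial_integrand (fst (fst x)) (snd x)) - integral\<^sup>L M2 (jump_series_integrand (snd (fst x)) (snd x))"
  using x
proof (cases rule: Delta_cases)
  case (1 y t)
  then show ?thesis
    using set_integral_initial_integrand[of y t] jump_series_integrand_zero[of t] by (simp add: G_def)
next
  case (2 s t)
  then show ?thesis
    using set_integral_initial_integrand[of 0 t] set_integral_jump_series_integrand[of s t] by (simp add: G_def)
qed

lemma G_integrands_diff_le:
  assumes "0 \<le> y" "y \<le> 1" "0 \<le> y'" "y' \<le> 1"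
    and "0 \<le> s" "s \<le> t" "t \<le> T" "0 \<le> s'" "s' \<le> t'" "t' \<le> T" and p: "p \<in> space M2"
  shows "\<bar>initial_integrand y t p - initial_integrand y' t' p
      + (jump_series_integrand s t p - jump_series_integrand s' t' p)\<bar>
    \<le> strip (min y y') (max y y') p + 2 * (\<bar>s - s'\<bar> + \<bar>t - t'\<bar>) * (strip 0 1 p * supnorm T (fst p))"
proof (cases "p \<in> W \<times> {0..<1}")
  case False
  then show ?thesis
    using assms by (auto simp: initial_integrand_def jump_series_integrand_def strip_def indicator_def)
next
  case True
  define w z where "w = fst p" and "z = snd p"
  have w: "w \<in> W" and z: "0 \<le> z" "z < 1" using True by (auto simp: w_def z_def)
  define E E' where "E = survival_i \<theta> w t z" and "E' = survival_i \<theta> w t' z"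
  define I I' :: real where "I = indicator {y..<1} z" and "I' = indicator {y'..<1} z"
  have E: "0 \<le> E" "E \<le> 1" using survival_i_bounds[OF w] assms by (auto simp: E_def)
  have EE: "\<bar>E - E'\<bar> \<le> supnorm T w * \<bar>t - t'\<bar>"
    unfolding E_def E'_def using survival_i_lipschitz[OF w z(1) _ _ _ _ assms(10)] assms z by simp
  have II: "\<bar>I - I'\<bar> \<le> indicator {min y y'..<max y y'} z" "0 \<le> I'" "I' \<le> 1"
    using z by (auto simp: I_def I'_def indicator_def)
  have IE: "\<bar>I * E - I' * E'\<bar> \<le> indicator {min y y'..<max y y'} z + supnorm T w * \<bar>t - t'\<bar>"
    using abs_mult_diff_le[OF E II(2,3), where a=I and b'=E'] II(1) EE by linarith
  have JS: "\<bar>jump_series \<theta> w T z s t - jump_series \<theta> w T z s' t'\<bar>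
      \<le> supnorm T w * (2 * \<bar>s - s'\<bar> + \<bar>t - t'\<bar>)"
    using z assms by (intro jump_series_lipschitz[OF w]) auto
  have "initial_integrand y t p - initial_integrand y' t' p
      + (jump_series_integrand s t p - jump_series_integrand s' t' p)
    = ((I * E - I' * E') + (jump_series \<theta> w T z s t - jump_series \<theta> w T z s' t')) * sg p"
    using True by (simp add: initial_integrand_def jump_series_integrand_def strip_def w_def z_def
        E_def E'_def I_def I'_def indicator_def algebra_simps mem_Times_iff)
  also have "\<bar>\<dots>\<bar> \<le> (\<bar>I * E - I' * E'\<bar> + \<bar>jump_series \<theta> w T z s t - jump_series \<theta> w T z s' t'\<bar>) * sg p"
    using sg_nonneg[OF p] by (simp add: abs_mult mult_right_mono)
  also have "\<dots> \<le> (indicator {min y y'..<max y y'} z + 2 * (\<bar>s - s'\<bar> + \<bar>t - t'\<bar>) * supnorm T w) * sg p"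
    using IE JS sg_nonneg[OF p] by (intro mult_right_mono) (auto simp: algebra_simps)
  also have "\<dots> = strip (min y y') (max y y') p + 2 * (\<bar>s - s'\<bar> + \<bar>t - t'\<bar>) * (strip 0 1 p * supnorm T (fst p))"
    using True by (simp add: strip_def w_def z_def indicator_def algebra_simps mem_Times_iff)
  finally show ?thesis .
qed

lemma G_lipschitz:
  assumes x: "x \<in> Delta T" and x': "x' \<in> Delta T"
  shows "\<bar>G lam \<sigma> \<theta> (fst x') (snd x') - G lam \<sigma> \<theta> (fst x) (snd x)\<bar> \<le> (1 + 4 * M_W) * dist x' x"
proof -
  obtain y s t y' s' t' where xs: "x = ((y, s), t)" and xs': "x' = ((y', s'), t')"
    by (metis prod.collapse)
  note d = mem_Delta_bounds[OF x[unfolded xs]] and d' = mem_Delta_bounds[OF x'[unfolded xs']]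
  define c where "c = 2 * (\<bar>s - s'\<bar> + \<bar>t - t'\<bar>)"
  define F where "F p = initial_integrand y t p - initial_integrand y' t' p
      + (jump_series_integrand s t p - jump_series_integrand s' t' p)" for p
  define Q where "Q p = strip (min y y') (max y y') p + c * (strip 0 1 p * supnorm T (fst p))" for p
  have iF: "integrable M2 F"
    unfolding F_def[abs_def] using d d'
    by (intro Bochner_Integration.integrable_add Bochner_Integration.integrable_diff
        integrable_initial_integrand integrable_jump_series_integrand) auto
  have iQ: "integrable M2 Q"
    unfolding Q_def[abs_def] using d d' integrable_strip(1) integrable_strip_supnorm(1) by auto
  have "G lam \<sigma> \<theta> (fst x') (snd x') - G lam \<sigma> \<theta> (fst x) (snd x) = integral\<^sup>L M2 F"
    using G_eq_integrals[OF x] G_eq_integrals[OF x'] d d' unfolding F_def xs xs'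
    by (simp add: integrable_initial_integrand integrable_jump_series_integrand)
  also have "\<bar>\<dots>\<bar> \<le> integral\<^sup>L M2 Q"
  proof -
    have "\<bar>F p\<bar> \<le> Q p" if "p \<in> space M2" for p
      using G_integrands_diff_le[OF d(1,2) d'(1,2) d(3-5) d'(3-5) that] by (simp add: F_def Q_def c_def)
    then have "integral\<^sup>L M2 F \<le> integral\<^sup>L M2 Q" "integral\<^sup>L M2 (\<lambda>p. - F p) \<le> integral\<^sup>L M2 Q"
      by (intro integral_mono iF iQ integrable_minus; force simp: abs_le_iff)+
    then show ?thesis by simp
  qed
  also have "\<dots> = \<bar>y - y'\<bar> + c * integral\<^sup>L M2 (\<lambda>p. strip 0 1 p * supnorm T (fst p))"
    unfolding Q_def using d d' integrable_strip integrable_strip_supnorm(1)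
    by (simp add: abs_if min_def max_def)
  also have "\<dots> \<le> \<bar>y - y'\<bar> + c * M_W"
    using integrable_strip_supnorm(2) by (simp add: c_def mult_left_mono)
  also have "\<dots> \<le> (1 + 4 * M_W) * dist x' x"
  proof -
    have "\<bar>y - y'\<bar> \<le> dist x' x" "\<bar>s - s'\<bar> \<le> dist x' x" "\<bar>t - t'\<bar> \<le> dist x' x"
      using dist_fst_le[of "fst x'" "fst x"] dist_snd_le[of "fst x'" "fst x"] dist_fst_le[of x' x]
        dist_snd_le[of x' x]
      unfolding xs xs' by (auto simp: dist_real_def abs_minus_commute)
    then have "c * M_W \<le> 4 * dist x' x * M_W"
      using M_W_nonneg unfolding c_def by (intro mult_right_mono) auto
    with \<open>\<bar>y - y'\<bar> \<le> dist x' x\<close> show ?thesis by (simp add: algebra_simps)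
  qed
  finally show ?thesis .
qed

end

theorem lemmaA4:
  fixes T :: real
    and W :: "(real \<times> real \<Rightarrow> real) set"
    and lam :: "(real \<times> real \<Rightarrow> real) measure"
    and \<sigma> :: "(real \<times> real \<Rightarrow> real) \<Rightarrow> real \<Rightarrow> real"
  assumes T_pos: "T > 0"
    and W_adm: "admissible_W T W"
    and lam_prob: "prob_space lam"
    and lam_space: "space lam = W"
    and lam_sets: "sets lam = sup_borel_sets T W"
    and M_W_finite: "(\<integral>\<^sup>+ w. ennreal (supnorm T w) \<partial>lam) < \<infinity>"
    and C'_W_finite: "\<exists>C. \<forall>w\<in>W. \<forall>p\<in>rect T. \<forall>q\<in>rect T. \<bar>w p - w q\<bar> \<le> C"
    and \<sigma>_nonneg: "\<forall>w\<in>W. \<forall>y\<in>{0..1}. 0 \<le> \<sigma> w y"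
    and \<sigma>_meas: "(\<lambda>(w, y). \<sigma> w y) \<in> borel_measurable (lam \<Otimes>\<^sub>M restrict_space lborel {0..1})"
    and \<sigma>_int_w: "\<forall>y\<in>{0..1}. (\<integral>\<^sup>+ w. ennreal (\<sigma> w y) \<partial>lam) = 1"
    and \<sigma>_int_z: "\<forall>w\<in>W. (\<integral>\<^sup>+ z \<in> {0..1}. ennreal (\<sigma> w z) \<partial>lborel) = 1"
  shows "\<forall>x\<in>Delta T. \<forall>e>0. \<exists>d>0. \<forall>\<theta>\<in>Theta T. \<forall>x'\<in>Delta T.
           dist x' x < d \<longrightarrow> \<bar>G lam \<sigma> \<theta> (fst x') (snd x') - G lam \<sigma> \<theta> (fst x) (snd x)\<bar> < e"
proof (intro ballI allI impI)
  fix x :: "(real \<times> real) \<times> real" and e :: real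
  assume x: "x \<in> Delta T" and e: "0 < e"
  define C where "C = 1 + 4 * enn2real (\<integral>\<^sup>+ w. ennreal (supnorm T w) \<partial>lam)"
  have C: "0 < C" by (simp add: C_def add_pos_nonneg)
  show "\<exists>d>0. \<forall>\<theta>\<in>Theta T. \<forall>x'\<in>Delta T.
      dist x' x < d \<longrightarrow> \<bar>G lam \<sigma> \<theta> (fst x') (snd x') - G lam \<sigma> \<theta> (fst x) (snd x)\<bar> < e"
  proof (intro exI[of _ "e / C"] conjI ballI impI)
    fix \<theta> x' assume \<theta>: "\<theta> \<in> Theta T" and x': "x' \<in> Delta T" and dx: "dist x' x < e / C"
    interpret G_setting T W \<theta> lam \<sigma>
      by (intro G_setting.intro theta_measure_setting.intro theta_setting.intro
          theta_measure_setting_axioms.intro G_setting_axioms.intro)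
        (rule T_pos W_adm \<theta> lam_sets lam_space lam_prob M_W_finite \<sigma>_nonneg \<sigma>_meas \<sigma>_int_w \<sigma>_int_z)+
    have "\<bar>G lam \<sigma> \<theta> (fst x') (snd x') - G lam \<sigma> \<theta> (fst x) (snd x)\<bar> \<le> C * dist x' x"
      using G_lipschitz[OF x x'] by (simp add: C_def M_W_def)
    also have "\<dots> < e" using dx C by (simp add: field_simps)
    finally show "\<bar>G lam \<sigma> \<theta> (fst x') (snd x') - G lam \<sigma> \<theta> (fst x) (snd x)\<bar> < e" .
  qed (use e C in simp)
qed

end
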